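(* In the setting of the context, there exist $M\ge1$ and $T>0$ such that for every $x\in\mathbb{R}^N$, $z_0\in\mathbb{R}^{N+1}$ and $t\in[0,T]$, $$\frac1M\langle\widetilde C(t)x,x\rangle\le\langle C(z_0;t)x,x\rangle\le M\langle\widetilde C(t)x,x\rangle$$ and $$\frac1M\det\widetilde C(t)\le\det C(z_0;t)\le M\det\widetilde C(t).$$
   Context: $N\ge1$, $1\le p_0\le N$; $B$ constant real $N\times N$ with block structure: integers $r\ge1$, $p_0\ge p_1\ge\dots\ge p_r\ge1$, $\sum p_k=N$; in blocks $(B^{(k,l)})_{k,l=0}^r$ of size $p_k\times p_l$, $B^{(k,k+1)}=B_{k+1}$ has rank $p_{k+1}$, $B^{(k,l)}=0$ for $l>k+1$, others arbitrary; $B_0$ is obtained from $B$ by replacing all blocks other than the $B^{(k,k+1)}$ by zero. $a_{ij}(z)$, $i,j\le p_0$, $z\in\mathbb{R}^{N+1}$, symmetric with $\Lambda^{-1}|\xi|^2\le\sum a_{ij}(z)\xi_i\xi_j\le\Lambda|\xi|^2$, $\Lambda\ge1$. $A(z_0)$: $N\times N$ matrix with upper-left block $(a_{ij}(z_0))$, zeros elsewhere; $\mathcal I$: upper-left block $I_{p_0}$, zeros elsewhere. $E(s)=\exp(-sB^T)$, $E_0(s)=\exp(-sB_0^T)$, $C(z_0;t)=\int_0^tE(s)A(z_0)E(s)^Tds$, $\widetilde C(t)=\int_0^tE_0(s)\mathcal IE_0^T(s)ds$. *)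

theory Defs
  imports "HOL-Analysis.Analysis" "Jordan_Normal_Form.Determinant"
    "Jordan_Normal_Form.DL_Rank" "Jordan_Normal_Form.DL_Submatrix"
begin

text \<open>Matrices are Jordan_Normal_Form matrices (type real mat) of dimension N x N;
  indices run over 0..N-1. The blocks are indexed k = 0..r with sizes p k.\<close>

definition blk_off :: "(nat \<Rightarrow> nat) \<Rightarrow> nat \<Rightarrow> nat" where
  "blk_off p k = (\<Sum>j<k. p j)"

definition blk_idx :: "(nat \<Rightarrow> nat) \<Rightarrow> nat \<Rightarrow> nat set" where
  "blk_idx p k = {blk_off p k ..< blk_off p k + p k}"

definition blk :: "real mat \<Rightarrow> (nat \<Rightarrow> nat) \<Rightarrow> nat \<Rightarrow> nat \<Rightarrow> real mat" where
  "blk B p k l = submatrix B (blk_idx p k) (blk_idx p l)"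

definition block_structure :: "nat \<Rightarrow> real mat \<Rightarrow> nat \<Rightarrow> (nat \<Rightarrow> nat) \<Rightarrow> bool" where
  "block_structure N B r p \<longleftrightarrow>
     B \<in> carrier_mat N N \<and> r \<ge> 1 \<and> (\<forall>k<r. p (Suc k) \<le> p k) \<and> p r \<ge> 1 \<and>
     (\<Sum>k\<le>r. p k) = N \<and>
     (\<forall>k<r. vec_space.rank (p k) (blk B p k (Suc k)) = p (Suc k)) \<and>
     (\<forall>k\<le>r. \<forall>l\<le>r. Suc k < l \<longrightarrow> blk B p k l = 0\<^sub>m (p k) (p l))"

definition B0_of :: "nat \<Rightarrow> real mat \<Rightarrow> nat \<Rightarrow> (nat \<Rightarrow> nat) \<Rightarrow> real mat" where
  "B0_of N B r p = mat N N (\<lambda>(i,j).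
     if \<exists>k<r. i \<in> blk_idx p k \<and> j \<in> blk_idx p (Suc k) then B $$ (i,j) else 0)"

definition mat_exp :: "real mat \<Rightarrow> real mat" where
  "mat_exp A = mat (dim_row A) (dim_col A) (\<lambda>(i,j). \<Sum>m. (A ^\<^sub>m m) $$ (i,j) / fact m)"

definition Emat :: "real mat \<Rightarrow> real \<Rightarrow> real mat" where
  "Emat B s = mat_exp ((- s) \<cdot>\<^sub>m transpose_mat B)"

definition coef_mat :: "nat \<Rightarrow> nat \<Rightarrow> (nat \<Rightarrow> nat \<Rightarrow> 'z \<Rightarrow> real) \<Rightarrow> 'z \<Rightarrow> real mat" where
  "coef_mat N p0 a z0 = mat N N (\<lambda>(i,j). if i < p0 \<and> j < p0 then a i j z0 else 0)"

definition Ip0 :: "nat \<Rightarrow> nat \<Rightarrow> real mat" where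
  "Ip0 N p0 = mat N N (\<lambda>(i,j). if i < p0 \<and> i = j then 1 else 0)"

definition covar :: "nat \<Rightarrow> real mat \<Rightarrow> real mat \<Rightarrow> real \<Rightarrow> real mat" where
  "covar N B A t = mat N N (\<lambda>(i,j).
     integral {0..t} (\<lambda>s. (Emat B s * A * transpose_mat (Emat B s)) $$ (i,j)))"

definition Cmat :: "nat \<Rightarrow> real mat \<Rightarrow> nat \<Rightarrow> (nat \<Rightarrow> nat \<Rightarrow> 'z \<Rightarrow> real) \<Rightarrow> 'z \<Rightarrow> real \<Rightarrow> real mat" where
  "Cmat N B p0 a z0 t = covar N B (coef_mat N p0 a z0) t"

definition Ctilde :: "nat \<Rightarrow> real mat \<Rightarrow> nat \<Rightarrow> (nat \<Rightarrow> nat) \<Rightarrow> real \<Rightarrow> real mat" where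
  "Ctilde N B r p t = covar N (B0_of N B r p) (Ip0 N (p 0)) t"

end

theory Submission
  imports Defs "HOL-Computational_Algebra.Polynomial"
begin

text \<open>The quadratic form of \<open>C(z\<^sub>0;t)\<close> is, up to the ellipticity constant, the Gramian form
  \<open>\<integral>\<^sub>0\<^sup>t |\<I> E(s)\<^sup>T x|\<^sup>2 ds\<close> of \<open>B\<close>, and that of \<open>C\<^sup>~(t)\<close> is the Gramian form of \<open>B\<^sub>0\<close>.
  Substituting \<open>s = t u\<close> and conjugating with the dilation \<open>diag (\<surd>t\<^bsup>2k+1\<^esup>)\<close> turns both into
  Gramian forms at time 1, for \<open>B\<^sub>0\<close> itself and for \<open>B\<^sub>0 + O(t)\<close>. The time-1 Gramian form of \<open>B\<^sub>0\<close> is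
  positive definite because the blocks \<open>B\<^sub>k\<close> have full rank (Kalman's condition), hence coercive, so it
  absorbs the \<open>O(t)\<close> perturbation for small \<open>t\<close>. Comparable positive definite quadratic forms have
  comparable determinants, by induction on the dimension via Schur complements.\<close>

text \<open>Matrices are handled through their entry functions on \<open>{..<n}\<^sup>2\<close>: \<open>mpow n F m\<close> and
  \<open>mexp n F s\<close> are the entries of \<open>F\<^sup>m\<close> and \<open>exp (s F)\<close>.\<close>

fun mpow :: "nat \<Rightarrow> (nat \<Rightarrow> nat \<Rightarrow> real) \<Rightarrow> nat \<Rightarrow> nat \<Rightarrow> nat \<Rightarrow> real" where
  "mpow n F 0 i j = (if i = j then 1 else 0)"
| "mpow n F (Suc m) i j = (\<Sum>l<n. mpow n F m i l * F l j)"

lemma mpow_Suc_left: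
  assumes "i < n" "j < n"
  shows "mpow n F (Suc m) i j = (\<Sum>l<n. F i l * mpow n F m l j)"
  using assms
proof (induction m arbitrary: i j)
  case 0
  have "(\<Sum>l<n. (if i = l then 1 else 0) * F l j) = (\<Sum>l<n. if l = i then F l j else 0)"
    by (rule sum.cong) auto
  then have "(\<Sum>l<n. (if i = l then 1 else 0) * F l j) = F i j"
    using 0 by simp
  moreover have "(\<Sum>l<n. F i l * (if l = j then 1 else 0)) = F i j"
    using 0 by (simp add: if_distrib cong: if_cong)
  ultimately show ?case by simp
next
  case (Suc m)
  have "mpow n F (Suc (Suc m)) i j = (\<Sum>l<n. (\<Sum>k<n. F i k * mpow n F m k l) * F l j)"
    using Suc by simp
  also have "\<dots> = (\<Sum>k<n. F i k * (\<Sum>l<n. mpow n F m k l * F l j))"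
    by (simp add: sum_distrib_left sum_distrib_right mult.assoc) (rule sum.swap)
  finally show ?case by simp
qed

lemma mpow_cong:
  assumes "\<And>a b. a < n \<Longrightarrow> b < n \<Longrightarrow> F a b = G a b" "j < n"
  shows "mpow n F m i j = mpow n G m i j"
  using assms(2) by (induction m arbitrary: j) (auto intro!: sum.cong simp: assms(1))

lemma mpow_transpose_scale:
  assumes "i < n" "j < n"
  shows "mpow n (\<lambda>a b. c * F b a) m i j = c ^ m * mpow n F m j i"
  using assms
proof (induction m arbitrary: i j)
  case 0 then show ?case by auto
next
  case (Suc m)
  have "mpow n (\<lambda>a b. c * F b a) (Suc m) i j = (\<Sum>l<n. c ^ m * mpow n F m l i * (c * F j l))"
    using Suc by simp
  also have "\<dots> = c ^ Suc m * (\<Sum>l<n. F j l * mpow n F m l i)"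
    by (simp add: sum_distrib_left algebra_simps)
  also have "\<dots> = c ^ Suc m * mpow n F (Suc m) j i"
    using mpow_Suc_left[OF Suc.prems(2,1)] by simp
  finally show ?case .
qed

lemma mpow_diag_conj:
  assumes w: "\<And>a. a < n \<Longrightarrow> w a \<noteq> 0"
    and G: "\<And>a b. a < n \<Longrightarrow> b < n \<Longrightarrow> G a b = c * w a / w b * F a b"
    and "i < n" "j < n"
  shows "mpow n G m i j = c ^ m * w i / w j * mpow n F m i j"
  using assms(4)
proof (induction m arbitrary: j)
  case 0 then show ?case using w[OF assms(3)] by auto
next
  case (Suc m)
  have "mpow n G (Suc m) i j = (\<Sum>l<n. (c ^ m * w i / w l * mpow n F m i l) * (c * w l / w j * F l j))"
    using Suc G by simp
  also have "\<dots> = (\<Sum>l<n. c ^ Suc m * w i / w j * (mpow n F m i l * F l j))"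
    by (rule sum.cong) (use w in auto)
  also have "\<dots> = c ^ Suc m * w i / w j * mpow n F (Suc m) i j"
    by (simp add: sum_distrib_left)
  finally show ?case .
qed

lemma mpow_abs_le:
  assumes K: "\<And>a b. a < n \<Longrightarrow> b < n \<Longrightarrow> \<bar>F a b\<bar> \<le> K" "0 \<le> K"
    and "i < n" "j < n"
  shows "\<bar>mpow n F m i j\<bar> \<le> (real n * K) ^ m"
  using assms(4)
proof (induction m arbitrary: j)
  case 0 then show ?case by auto
next
  case (Suc m)
  have "\<bar>mpow n F (Suc m) i j\<bar> \<le> (\<Sum>l<n. \<bar>mpow n F m i l * F l j\<bar>)"
    by (simp add: sum_abs)
  also have "\<dots> \<le> (\<Sum>l<n. (real n * K) ^ m * K)"
    by (rule sum_mono) (use Suc K in \<open>auto simp: abs_mult intro!: mult_mono\<close>)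
  also have "\<dots> = (real n * K) ^ Suc m" by simp
  finally show ?case .
qed

lemma mpow_diff_abs_le:
  assumes F: "\<And>a b. a < n \<Longrightarrow> b < n \<Longrightarrow> \<bar>F a b\<bar> \<le> K"
    and G: "\<And>a b. a < n \<Longrightarrow> b < n \<Longrightarrow> \<bar>G a b\<bar> \<le> K"
    and D: "\<And>a b. a < n \<Longrightarrow> b < n \<Longrightarrow> \<bar>F a b - G a b\<bar> \<le> \<delta>"
    and K1: "1 \<le> K" and "i < n" "j < n"
  shows "\<bar>mpow n F m i j - mpow n G m i j\<bar> \<le> real m * (real n * K) ^ m * \<delta>"
  using assms(6)
proof (induction m arbitrary: j)
  case 0 then show ?case by auto
next
  case (Suc m)
  have d0: "0 \<le> \<delta>" using D[of i i] \<open>i < n\<close> by auto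
  have "\<bar>mpow n F (Suc m) i j - mpow n G (Suc m) i j\<bar>
      = \<bar>\<Sum>l<n. (mpow n F m i l - mpow n G m i l) * F l j + mpow n G m i l * (F l j - G l j)\<bar>"
    by (simp add: sum_subtractf[symmetric] algebra_simps)
  also have "\<dots> \<le> (\<Sum>l<n. \<bar>(mpow n F m i l - mpow n G m i l) * F l j + mpow n G m i l * (F l j - G l j)\<bar>)"
    by (rule sum_abs)
  also have "\<dots> \<le> (\<Sum>l<n. real m * (real n * K) ^ m * \<delta> * K + (real n * K) ^ m * \<delta>)"
  proof (rule sum_mono)
    fix l assume l: "l \<in> {..<n}"
    have a: "\<bar>(mpow n F m i l - mpow n G m i l) * F l j\<bar> \<le> real m * (real n * K) ^ m * \<delta> * K"
      unfolding abs_mult using Suc.IH[of l] F[of l j] l Suc.prems K1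
      by (intro mult_mono) auto
    have b: "\<bar>mpow n G m i l * (F l j - G l j)\<bar> \<le> (real n * K) ^ m * \<delta>"
      unfolding abs_mult using mpow_abs_le[of n G K i l m] G D[of l j] l Suc.prems K1 \<open>i < n\<close>
      by (intro mult_mono) auto
    show "\<bar>(mpow n F m i l - mpow n G m i l) * F l j + mpow n G m i l * (F l j - G l j)\<bar>
        \<le> real m * (real n * K) ^ m * \<delta> * K + (real n * K) ^ m * \<delta>"
      using a b abs_triangle_ineq order_trans add_mono by fastforce
  qed
  also have "\<dots> \<le> (\<Sum>l<n. real m * (real n * K) ^ m * \<delta> * K + (real n * K) ^ m * \<delta> * K)"
    using d0 K1 by (intro sum_mono add_left_mono) (auto intro!: mult_left_mono[where b = K and a = 1, simplified])
  also have "\<dots> = real (Suc m) * (real n * K) ^ Suc m * \<delta>"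
    by (simp add: algebra_simps)
  finally show ?case .
qed

lemma mat_pow_entry_eq_mpow:
  assumes A: "A \<in> carrier_mat n n" and "i < n" "j < n"
  shows "(A ^\<^sub>m m) $$ (i, j) = mpow n (\<lambda>a b. A $$ (a, b)) m i j"
  using assms(3)
proof (induction m arbitrary: j)
  case 0 then show ?case using A \<open>i < n\<close> by simp
next
  case (Suc m)
  have P: "A ^\<^sub>m m \<in> carrier_mat n n" using A by simp
  have "(A ^\<^sub>m Suc m) $$ (i, j) = (\<Sum>l = 0..<n. (A ^\<^sub>m m) $$ (i, l) * A $$ (l, j))"
    using P A Suc.prems \<open>i < n\<close> by (simp add: scalar_prod_def)
  then show ?case using Suc by (simp add: atLeast0LessThan)
qed

definition entry_bound :: "nat \<Rightarrow> (nat \<Rightarrow> nat \<Rightarrow> real) \<Rightarrow> real" where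
  "entry_bound n F = 1 + (\<Sum>a<n. \<Sum>b<n. \<bar>F a b\<bar>)"

lemma one_le_entry_bound: "1 \<le> entry_bound n F"
  unfolding entry_bound_def by (auto intro!: sum_nonneg)

lemma abs_le_entry_bound: assumes "a < n" "b < n" shows "\<bar>F a b\<bar> \<le> entry_bound n F"
proof -
  have "\<bar>F a b\<bar> \<le> (\<Sum>b'<n. \<bar>F a b'\<bar>)"
    using assms by (intro member_le_sum) auto
  also have "\<dots> \<le> (\<Sum>a'<n. \<Sum>b'<n. \<bar>F a' b'\<bar>)"
    using assms by (intro member_le_sum[where f = "\<lambda>a'. \<Sum>b'<n. \<bar>F a' b'\<bar>"]) (auto intro!: sum_nonneg)
  finally show ?thesis unfolding entry_bound_def by simp
qed

definition mexp :: "nat \<Rightarrow> (nat \<Rightarrow> nat \<Rightarrow> real) \<Rightarrow> real \<Rightarrow> nat \<Rightarrow> nat \<Rightarrow> real" where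
  "mexp n F s i j = (\<Sum>m. s ^ m * mpow n F m i j / fact m)"

lemma mexp_term_abs_le:
  assumes "i < n" "j < n"
  shows "\<bar>s ^ m * mpow n F m i j / fact m\<bar> \<le> inverse (fact m) * (\<bar>s\<bar> * real n * entry_bound n F) ^ m"
proof -
  have k0: "0 \<le> entry_bound n F" using one_le_entry_bound[of n F] by linarith
  have "\<bar>mpow n F m i j\<bar> \<le> (real n * entry_bound n F) ^ m"
    by (rule mpow_abs_le[OF abs_le_entry_bound k0 assms])
  then have h: "\<bar>s\<bar> ^ m * \<bar>mpow n F m i j\<bar> \<le> \<bar>s\<bar> ^ m * (real n * entry_bound n F) ^ m"
    by (intro mult_left_mono) auto
  have "\<bar>s ^ m * mpow n F m i j / fact m\<bar> = (\<bar>s\<bar> ^ m * \<bar>mpow n F m i j\<bar>) / fact m"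
    by (simp add: abs_mult power_abs)
  also have "\<dots> \<le> (\<bar>s\<bar> ^ m * (real n * entry_bound n F) ^ m) / fact m"
    by (rule divide_right_mono[OF h]) simp
  also have "\<dots> = inverse (fact m) * (\<bar>s\<bar> * real n * entry_bound n F) ^ m"
    by (simp add: power_mult_distrib divide_inverse mult.commute mult.left_commute)
  finally show ?thesis .
qed

lemma mexp_summable:
  assumes "i < n" "j < n"
  shows "summable (\<lambda>m. s ^ m * mpow n F m i j / fact m)"
  by (rule summable_comparison_test[OF _ summable_exp[of "\<bar>s\<bar> * real n * entry_bound n F"]])
     (use mexp_term_abs_le[OF assms] in auto)

lemma continuous_on_mexp:
  assumes "i < n" "j < n"
  shows "continuous_on S (\<lambda>s. mexp n F s i j)"
proof -
  have e: "mexp n F s i j = (\<Sum>m. (mpow n F m i j / fact m) * s ^ m)" for s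
    unfolding mexp_def by (simp add: mult_ac)
  have "isCont (\<lambda>s. \<Sum>m. (mpow n F m i j / fact m) * s ^ m) x" for x
    by (rule isCont_powser_converges_everywhere)
       (use mexp_summable[OF assms] in \<open>simp add: mult_ac\<close>)
  then show ?thesis unfolding e by (intro continuous_at_imp_continuous_on) auto
qed

lemma mexp_diag_conj:
  assumes w: "\<And>a. a < n \<Longrightarrow> w a \<noteq> 0"
    and G: "\<And>a b. a < n \<Longrightarrow> b < n \<Longrightarrow> G a b = c * w a / w b * F a b"
    and ij: "i < n" "j < n"
  shows "mexp n G s i j = w i / w j * mexp n F (c * s) i j"
proof -
  have pc: "\<And>m. mpow n G m i j = c ^ m * w i / w j * mpow n F m i j"
    by (rule mpow_diag_conj[OF w G ij])
  have "mexp n G s i j = (\<Sum>m. w i / w j * ((c * s) ^ m * mpow n F m i j / fact m))"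
    unfolding mexp_def pc by (simp add: power_mult_distrib mult_ac)
  also have "\<dots> = w i / w j * mexp n F (c * s) i j"
    unfolding mexp_def by (rule suminf_mult[OF mexp_summable[OF ij]])
  finally show ?thesis .
qed

lemma mexp_diff_term_abs_le:
  assumes F: "\<And>a b. a < n \<Longrightarrow> b < n \<Longrightarrow> \<bar>F a b\<bar> \<le> K"
    and G: "\<And>a b. a < n \<Longrightarrow> b < n \<Longrightarrow> \<bar>G a b\<bar> \<le> K"
    and D: "\<And>a b. a < n \<Longrightarrow> b < n \<Longrightarrow> \<bar>F a b - G a b\<bar> \<le> \<delta>"
    and K1: "1 \<le> K" and ij: "i < n" "j < n" and s: "\<bar>s\<bar> \<le> 1"
  shows "\<bar>s ^ m * mpow n F m i j / fact m - s ^ m * mpow n G m i j / fact m\<bar>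
      \<le> \<delta> * ((2 * real n * K) ^ m / fact m)"
proof -
  have "\<bar>mpow n F m i j - mpow n G m i j\<bar> \<le> real m * (real n * K) ^ m * \<delta>"
    by (rule mpow_diff_abs_le[OF F G D K1 ij])
  also have "\<dots> \<le> 2 ^ m * (real n * K) ^ m * \<delta>"
  proof -
    have "real m \<le> 2 ^ m" using less_exp[of m] by (metis of_nat_le_iff of_nat_numeral of_nat_power less_imp_le)
    then show ?thesis using D[OF ij(1) ij(1)] K1 by (intro mult_right_mono) auto
  qed
  finally have h: "\<bar>mpow n F m i j - mpow n G m i j\<bar> \<le> (2 * real n * K) ^ m * \<delta>"
    by (simp add: power_mult_distrib)
  have "\<bar>s ^ m * mpow n F m i j / fact m - s ^ m * mpow n G m i j / fact m\<bar>
      = \<bar>s\<bar> ^ m * \<bar>mpow n F m i j - mpow n G m i j\<bar> / fact m"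
    by (simp add: abs_mult power_abs right_diff_distrib[symmetric] diff_divide_distrib[symmetric])
  also have "\<dots> \<le> 1 * ((2 * real n * K) ^ m * \<delta>) / fact m"
    by (intro divide_right_mono mult_mono h) (use s in \<open>auto intro: power_le_one\<close>)
  finally show ?thesis by (simp add: mult_ac)
qed

lemma mexp_diff_abs_le:
  assumes F: "\<And>a b. a < n \<Longrightarrow> b < n \<Longrightarrow> \<bar>F a b\<bar> \<le> K"
    and G: "\<And>a b. a < n \<Longrightarrow> b < n \<Longrightarrow> \<bar>G a b\<bar> \<le> K"
    and D: "\<And>a b. a < n \<Longrightarrow> b < n \<Longrightarrow> \<bar>F a b - G a b\<bar> \<le> \<delta>"
    and K1: "1 \<le> K" and ij: "i < n" "j < n" and s: "\<bar>s\<bar> \<le> 1"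
  shows "\<bar>mexp n F s i j - mexp n G s i j\<bar> \<le> \<delta> * exp (2 * real n * K)"
proof -
  have exp: "(\<lambda>m. (2 * real n * K) ^ m / fact m) sums exp (2 * real n * K)"
    using exp_converges[of "2 * real n * K"] by (simp add: divide_inverse mult.commute)
  have "mexp n F s i j - mexp n G s i j
      = (\<Sum>m. s ^ m * mpow n F m i j / fact m - s ^ m * mpow n G m i j / fact m)"
    unfolding mexp_def by (rule suminf_diff[OF mexp_summable[OF ij] mexp_summable[OF ij]])
  also have "\<bar>\<dots>\<bar> \<le> (\<Sum>m. \<delta> * ((2 * real n * K) ^ m / fact m))"
    unfolding real_norm_def[symmetric]
  proof (rule norm_suminf_le)
    show "norm (s ^ m * mpow n F m i j / fact m - s ^ m * mpow n G m i j / fact m)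
        \<le> \<delta> * ((2 * real n * K) ^ m / fact m)" for m
      using mexp_diff_term_abs_le[where m = m, OF F G D K1 ij s] by simp
    show "summable (\<lambda>m. \<delta> * ((2 * real n * K) ^ m / fact m))"
      by (intro summable_mult sums_summable[OF exp])
  qed
  also have "\<dots> = \<delta> * exp (2 * real n * K)"
    using sums_unique[OF sums_mult[OF exp, of \<delta>]] by simp
  finally show ?thesis .
qed

definition quad_form :: "nat \<Rightarrow> real mat \<Rightarrow> (nat \<Rightarrow> real) \<Rightarrow> real" where
  "quad_form n X x = (\<Sum>i<n. \<Sum>j<n. X $$ (i, j) * x i * x j)"

definition sym_mat :: "nat \<Rightarrow> real mat \<Rightarrow> bool" where
  "sym_mat n X \<longleftrightarrow> (\<forall>i<n. \<forall>j<n. X $$ (i, j) = X $$ (j, i))"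

definition pos_def_mat :: "nat \<Rightarrow> real mat \<Rightarrow> bool" where
  "pos_def_mat n X \<longleftrightarrow> (\<forall>x. (\<exists>i<n. x i \<noteq> 0) \<longrightarrow> 0 < quad_form n X x)"

definition schur_compl :: "real mat \<Rightarrow> nat \<Rightarrow> real mat" where
  "schur_compl X m = mat m m (\<lambda>(i, j). X $$ (Suc i, Suc j) - X $$ (Suc i, 0) * X $$ (0, Suc j) / X $$ (0, 0))"

lemma quad_form_eq_scalar_prod:
  assumes "X \<in> carrier_mat n n" "v \<in> carrier_vec n"
  shows "(X *\<^sub>v v) \<bullet> v = quad_form n X (\<lambda>i. v $ i)"
  using assms
  by (simp add: quad_form_def scalar_prod_def atLeast0LessThan sum_distrib_left mult_ac)

lemma quad_form_unit0: "quad_form (Suc m) X (\<lambda>i. if i = 0 then 1 else 0) = X $$ (0, 0)"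
  unfolding quad_form_def by (simp only: sum.lessThan_Suc_shift) simp

lemma quad_form_schur_compl:
  assumes sy: "sym_mat (Suc m) X" and g: "X $$ (0, 0) \<noteq> 0"
  shows "quad_form (Suc m) X x = X $$ (0, 0) * (x 0 + (\<Sum>j<m. X $$ (0, Suc j) * x (Suc j)) / X $$ (0, 0))\<^sup>2
           + quad_form m (schur_compl X m) (\<lambda>i. x (Suc i))"
proof -
  define g where "g = X $$ (0, 0)"
  define b where "b = (\<Sum>j<m. X $$ (0, Suc j) * x (Suc j))"
  define A where "A = (\<Sum>i<m. \<Sum>j<m. X $$ (Suc i, Suc j) * x (Suc i) * x (Suc j))"
  have c1: "(\<Sum>i<m. X $$ (Suc i, 0) * x (Suc i) * x 0) = b * x 0"
    unfolding b_def sum_distrib_right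
    by (rule sum.cong) (use sy in \<open>auto simp: sym_mat_def\<close>)
  have c2: "(\<Sum>j<m. X $$ (0, Suc j) * x 0 * x (Suc j)) = b * x 0"
    unfolding b_def sum_distrib_right by (rule sum.cong) auto
  have "quad_form (Suc m) X x = g * x 0 * x 0 + (\<Sum>j<m. X $$ (0, Suc j) * x 0 * x (Suc j))
      + ((\<Sum>i<m. X $$ (Suc i, 0) * x (Suc i) * x 0) + A)"
    unfolding quad_form_def A_def g_def by (simp only: sum.lessThan_Suc_shift sum.distrib)
  then have q1: "quad_form (Suc m) X x = g * x 0 * x 0 + 2 * b * x 0 + A"
    using c1 c2 by simp
  have "quad_form m (schur_compl X m) (\<lambda>i. x (Suc i)) =
      (\<Sum>i<m. \<Sum>j<m. X $$ (Suc i, Suc j) * x (Suc i) * x (Suc j)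
        - (X $$ (0, Suc i) * x (Suc i)) * (X $$ (0, Suc j) * x (Suc j)) / g)"
    unfolding quad_form_def schur_compl_def g_def
    by (intro sum.cong refl) (use sy in \<open>auto simp: sym_mat_def algebra_simps\<close>)
  also have "\<dots> = A - (\<Sum>i<m. \<Sum>j<m. (X $$ (0, Suc i) * x (Suc i)) * (X $$ (0, Suc j) * x (Suc j))) / g"
    unfolding A_def
    by (simp add: sum_subtractf sum_divide_distrib)
  also have "(\<Sum>i<m. \<Sum>j<m. (X $$ (0, Suc i) * x (Suc i)) * (X $$ (0, Suc j) * x (Suc j))) = b * b"
    unfolding b_def by (rule sum_product[symmetric])
  finally have q2: "quad_form m (schur_compl X m) (\<lambda>i. x (Suc i)) = A - b * b / g" .
  have gg: "g \<noteq> 0" using g g_def by simp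
  show ?thesis
    unfolding q1 q2 b_def[symmetric] g_def[symmetric] using gg
    by (simp add: field_simps power2_eq_square)
qed

lemma schur_compl_carrier: "schur_compl X m \<in> carrier_mat m m"
  unfolding schur_compl_def by simp

lemma sym_mat_schur_compl: assumes "sym_mat (Suc m) X" shows "sym_mat m (schur_compl X m)"
  using assms unfolding sym_mat_def schur_compl_def by (auto simp: mult.commute)

lemma pos_def_mat_schur_compl:
  assumes sy: "sym_mat (Suc m) X" and pd: "pos_def_mat (Suc m) X" and g: "X $$ (0, 0) \<noteq> 0"
  shows "pos_def_mat m (schur_compl X m)"
  unfolding pos_def_mat_def
proof (intro allI impI)
  fix z :: "nat \<Rightarrow> real" assume "\<exists>i<m. z i \<noteq> 0"
  then obtain i where i: "i < m" "z i \<noteq> 0" by auto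
  define x where "x = (\<lambda>k. if k = 0 then - (\<Sum>j<m. X $$ (0, Suc j) * z j) / X $$ (0, 0) else z (k - 1))"
  have xs: "(\<lambda>k. x (Suc k)) = z" unfolding x_def by auto
  have "\<exists>k<Suc m. x k \<noteq> 0" using i by (intro exI[of _ "Suc i"]) (auto simp: x_def)
  then have "0 < quad_form (Suc m) X x" using pd unfolding pos_def_mat_def by blast
  also have "quad_form (Suc m) X x = quad_form m (schur_compl X m) z"
    unfolding quad_form_schur_compl[OF sy g] xs by (simp add: x_def xs)
  finally show "0 < quad_form m (schur_compl X m) z" .
qed

lemma det_schur_compl:
  assumes X: "X \<in> carrier_mat (Suc m) (Suc m)" and g: "X $$ (0, 0) \<noteq> 0"
  shows "det X = X $$ (0, 0) * det (schur_compl X m)"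
proof -
  define E where "E = mat (Suc m) (Suc m) (\<lambda>(i, j). if i = j then 1 else if j = 0 then - X $$ (i, 0) / X $$ (0, 0) else 0)"
  have E: "E \<in> carrier_mat (Suc m) (Suc m)" unfolding E_def by simp
  have dE: "det E = 1"
  proof -
    have "det E = prod_list (diag_mat E)"
      by (rule det_lower_triangular[OF _ E]) (auto simp: E_def)
    also have "\<dots> = 1" unfolding prod_list_diag_prod using E by (simp add: E_def)
    finally show ?thesis .
  qed
  define Z where "Z = E * X"
  have Z: "Z \<in> carrier_mat (Suc m) (Suc m)" unfolding Z_def using E X by simp
  have dZ: "det Z = det X" unfolding Z_def using det_mult[OF E X] dE by simp
  have Zij: "Z $$ (i, j) = X $$ (i, j) + (if i = 0 then 0 else - X $$ (i, 0) / X $$ (0, 0) * X $$ (0, j))"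
    if ij: "i < Suc m" "j < Suc m" for i j
  proof -
    have "Z $$ (i, j) = (\<Sum>k<Suc m. E $$ (i, k) * X $$ (k, j))"
      unfolding Z_def using E X ij by (simp add: scalar_prod_def atLeast0LessThan)
    also have "\<dots> = (\<Sum>k<Suc m. (if k = i then X $$ (i, j) else 0)
        + (if k = 0 then (if i = 0 then 0 else - X $$ (i, 0) / X $$ (0, 0) * X $$ (0, j)) else 0))"
      by (rule sum.cong) (use ij in \<open>auto simp: E_def\<close>)
    also have "\<dots> = X $$ (i, j) + (if i = 0 then 0 else - X $$ (i, 0) / X $$ (0, 0) * X $$ (0, j))"
      using ij by (simp add: sum.distrib)
    finally show ?thesis .
  qed
  have "det Z = (\<Sum>i<Suc m. Z $$ (i, 0) * cofactor Z i 0)"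
    by (rule laplace_expansion_column[OF Z]) simp
  also have "\<dots> = Z $$ (0, 0) * cofactor Z 0 0"
  proof -
    have "(\<Sum>i<Suc m. Z $$ (i, 0) * cofactor Z i 0) = (\<Sum>i<Suc m. if i = 0 then Z $$ (0, 0) * cofactor Z 0 0 else 0)"
      by (rule sum.cong) (use g in \<open>auto simp: Zij\<close>)
    then show ?thesis by simp
  qed
  also have "cofactor Z 0 0 = det (schur_compl X m)"
  proof -
    have "mat_delete Z 0 0 = schur_compl X m"
      by (rule eq_matI) (use Z in \<open>auto simp: mat_delete_def schur_compl_def Zij\<close>)
    then show ?thesis unfolding cofactor_def by simp
  qed
  finally show ?thesis using dZ Zij[of 0 0] by simp
qed

lemma quad_form_schur_compl_minimizer:
  assumes sy: "sym_mat (Suc m) X" and g: "X $$ (0, 0) \<noteq> 0"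
  shows "quad_form (Suc m) X (\<lambda>k. if k = 0 then - (\<Sum>j<m. X $$ (0, Suc j) * z j) / X $$ (0, 0) else z (k - 1))
       = quad_form m (schur_compl X m) z"
proof -
  define x where "x = (\<lambda>k. if k = 0 then - (\<Sum>j<m. X $$ (0, Suc j) * z j) / X $$ (0, 0) else z (k - 1))"
  have xs: "(\<lambda>k. x (Suc k)) = z" unfolding x_def by auto
  show ?thesis
    unfolding x_def[symmetric] quad_form_schur_compl[OF sy g] xs by (simp add: x_def xs)
qed

lemma pos_def_mat_corner_pos:
  assumes "pos_def_mat (Suc m) X"
  shows "0 < X $$ (0, 0)"
proof -
  have "0 < quad_form (Suc m) X (\<lambda>i. if i = 0 then 1 else 0)"
    by (rule assms[unfolded pos_def_mat_def, rule_format]) auto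
  then show ?thesis unfolding quad_form_unit0 .
qed

lemma completed_square_lower_bound:
  fixes g \<beta> Z b t c c' :: real
  assumes g: "0 < g" and Z: "0 \<le> Z" and b: "b\<^sup>2 \<le> \<beta> * Z"
    and c: "0 \<le> c" "c \<le> g / 2" "c * (1 + 2 * \<beta> / g\<^sup>2) \<le> c'"
  shows "c * ((t - b / g)\<^sup>2 + Z) \<le> g * t\<^sup>2 + c' * Z"
proof -
  have "2 * t\<^sup>2 + 2 * (b / g)\<^sup>2 - (t - b / g)\<^sup>2 = (t + b / g)\<^sup>2"
    by (simp add: power2_eq_square algebra_simps)
  then have "(t - b / g)\<^sup>2 \<le> 2 * t\<^sup>2 + 2 * (b / g)\<^sup>2"
    using zero_le_power2[of "t + b / g"] by linarith
  also have "(b / g)\<^sup>2 \<le> \<beta> / g\<^sup>2 * Z"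
    using divide_right_mono[OF b, of "g\<^sup>2"] by (simp add: power_divide)
  finally have "(t - b / g)\<^sup>2 + Z \<le> 2 * t\<^sup>2 + (1 + 2 * \<beta> / g\<^sup>2) * Z"
    by (simp add: algebra_simps)
  from mult_left_mono[OF this c(1)]
  have "c * ((t - b / g)\<^sup>2 + Z) \<le> c * 2 * t\<^sup>2 + c * (1 + 2 * \<beta> / g\<^sup>2) * Z"
    by (simp add: algebra_simps)
  also have "\<dots> \<le> g * t\<^sup>2 + c' * Z"
    using c Z by (intro add_mono mult_right_mono) auto
  finally show ?thesis .
qed

lemma pos_def_mat_coercive:
  assumes "X \<in> carrier_mat n n" "sym_mat n X" "pos_def_mat n X"
  shows "\<exists>c>0. \<forall>x. c * (\<Sum>i<n. (x i)\<^sup>2) \<le> quad_form n X x"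
  using assms
proof (induction n arbitrary: X)
  case 0 then show ?case by (intro exI[of _ 1]) (simp add: quad_form_def)
next
  case (Suc m)
  define g where "g = X $$ (0, 0)"
  have g0: "0 < g" unfolding g_def by (rule pos_def_mat_corner_pos[OF Suc.prems(3)])
  then have gn: "X $$ (0, 0) \<noteq> 0" unfolding g_def by simp
  obtain c' where c': "0 < c'" "\<And>z. c' * (\<Sum>i<m. (z i)\<^sup>2) \<le> quad_form m (schur_compl X m) z"
    using Suc.IH[OF schur_compl_carrier sym_mat_schur_compl[OF Suc.prems(2)]
        pos_def_mat_schur_compl[OF Suc.prems(2,3) gn]] by blast
  define \<beta> where "\<beta> = (\<Sum>j<m. (X $$ (0, Suc j))\<^sup>2)"
  have dpos: "0 < 1 + 2 * \<beta> / g\<^sup>2" unfolding \<beta>_def using g0 by (simp add: add_pos_nonneg sum_nonneg)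
  define c where "c = min (g / 2) (c' / (1 + 2 * \<beta> / g\<^sup>2))"
  have c0: "0 < c" unfolding c_def using g0 c'(1) dpos by simp
  have cc': "c * (1 + 2 * \<beta> / g\<^sup>2) \<le> c'"
    unfolding c_def using dpos by (simp add: pos_le_divide_eq[symmetric])
  have cg: "c \<le> g / 2" unfolding c_def by (rule min.cobounded1)
  show ?case
  proof (intro exI[of _ c] conjI allI c0)
    fix x :: "nat \<Rightarrow> real"
    define z where "z = (\<lambda>i. x (Suc i))"
    define b where "b = (\<Sum>j<m. X $$ (0, Suc j) * x (Suc j))"
    define t where "t = x 0 + b / g"
    define Z where "Z = (\<Sum>i<m. (z i)\<^sup>2)"
    have "c * (\<Sum>i<Suc m. (x i)\<^sup>2) = c * ((t - b / g)\<^sup>2 + Z)"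
      unfolding Z_def z_def t_def sum.lessThan_Suc_shift by simp
    also have "\<dots> \<le> g * t\<^sup>2 + c' * Z"
    proof (rule completed_square_lower_bound[OF g0])
      show "b\<^sup>2 \<le> \<beta> * Z"
        unfolding b_def \<beta>_def Z_def z_def by (rule Cauchy_Schwarz_ineq_sum)
    qed (use c0 cc' cg in \<open>auto simp: Z_def intro: sum_nonneg\<close>)
    also have "\<dots> \<le> g * t\<^sup>2 + quad_form m (schur_compl X m) z"
      using c'(2)[of z] unfolding Z_def by simp
    also have "\<dots> = quad_form (Suc m) X x"
      unfolding quad_form_schur_compl[OF Suc.prems(2) gn] t_def b_def g_def z_def by simp
    finally show "c * (\<Sum>i<Suc m. (x i)\<^sup>2) \<le> quad_form (Suc m) X x" .
  qed
qed

lemma det_mono_quad_form: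
  assumes "X \<in> carrier_mat n n" "Y \<in> carrier_mat n n" "sym_mat n X" "sym_mat n Y" "pos_def_mat n X"
    "\<And>x. quad_form n X x \<le> quad_form n Y x"
  shows "0 < det X \<and> det X \<le> det Y"
  using assms
proof (induction n arbitrary: X Y)
  case 0 then show ?case by simp
next
  case (Suc m)
  have gX: "0 < X $$ (0, 0)" by (rule pos_def_mat_corner_pos[OF Suc.prems(5)])
  have gY: "X $$ (0, 0) \<le> Y $$ (0, 0)" using Suc.prems(6)[of "\<lambda>i. if i = 0 then 1 else 0"]
    by (simp add: quad_form_unit0)
  have gXn: "X $$ (0, 0) \<noteq> 0" and gYn: "Y $$ (0, 0) \<noteq> 0" using gX gY by auto
  have le: "quad_form m (schur_compl X m) z \<le> quad_form m (schur_compl Y m) z" for z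
  proof -
    define x where "x = (\<lambda>k. if k = 0 then - (\<Sum>j<m. Y $$ (0, Suc j) * z j) / Y $$ (0, 0) else z (k - 1))"
    have xs: "(\<lambda>k. x (Suc k)) = z" unfolding x_def by auto
    have "quad_form m (schur_compl X m) z \<le> quad_form (Suc m) X x"
      unfolding quad_form_schur_compl[OF Suc.prems(3) gXn] xs using gX by simp
    also have "\<dots> \<le> quad_form (Suc m) Y x" by (rule Suc.prems(6))
    also have "\<dots> = quad_form m (schur_compl Y m) z" unfolding x_def by (rule quad_form_schur_compl_minimizer[OF Suc.prems(4) gYn])
    finally show ?thesis .
  qed
  have IH: "0 < det (schur_compl X m) \<and> det (schur_compl X m) \<le> det (schur_compl Y m)"
    by (rule Suc.IH[OF schur_compl_carrier schur_compl_carrier sym_mat_schur_compl[OF Suc.prems(3)] sym_mat_schur_compl[OF Suc.prems(4)]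
          pos_def_mat_schur_compl[OF Suc.prems(3,5) gXn] le])
  have dX: "det X = X $$ (0, 0) * det (schur_compl X m)" by (rule det_schur_compl[OF Suc.prems(1) gXn])
  have dY: "det Y = Y $$ (0, 0) * det (schur_compl Y m)" by (rule det_schur_compl[OF Suc.prems(2) gYn])
  have "X $$ (0, 0) * det (schur_compl X m) \<le> Y $$ (0, 0) * det (schur_compl Y m)"
    by (rule mult_mono) (use IH gX gY in auto)
  moreover have "0 < X $$ (0, 0) * det (schur_compl X m)" using IH gX by simp
  ultimately show ?case unfolding dX dY by simp
qed

lemma quad_form_smult: "X \<in> carrier_mat n n \<Longrightarrow> quad_form n (c \<cdot>\<^sub>m X) x = c * quad_form n X x"
  unfolding quad_form_def by (simp add: sum_distrib_left mult.assoc)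

lemma sym_mat_smult: "X \<in> carrier_mat n n \<Longrightarrow> sym_mat n X \<Longrightarrow> sym_mat n (c \<cdot>\<^sub>m X)"
  unfolding sym_mat_def by simp


lemma det_le_of_quad_form_le:
  assumes X: "X \<in> carrier_mat n n" and Y: "Y \<in> carrier_mat n n"
    and sX: "sym_mat n X" and sY: "sym_mat n Y" and pY: "pos_def_mat n Y" and K: "0 < K"
    and le: "\<And>x. quad_form n Y x \<le> K * quad_form n X x"
  shows "det Y \<le> K ^ n * det X"
proof -
  have "0 < det ((1 / K) \<cdot>\<^sub>m Y) \<and> det ((1 / K) \<cdot>\<^sub>m Y) \<le> det X"
  proof (rule det_mono_quad_form)
    show "pos_def_mat n ((1 / K) \<cdot>\<^sub>m Y)"
      using pY K unfolding pos_def_mat_def quad_form_smult[OF Y] by simp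
    show "quad_form n ((1 / K) \<cdot>\<^sub>m Y) x \<le> quad_form n X x" for x
      using le[of x] K unfolding quad_form_smult[OF Y] by (simp add: field_simps)
  qed (use X Y sX sym_mat_smult[OF Y sY] in auto)
  then have "(1 / K) ^ n * det Y \<le> det X"
    using Y by (simp add: det_smult)
  then show ?thesis
    using K by (simp add: power_one_over field_simps)
qed

lemma det_comparable_of_quad_form_comparable:
  assumes X: "X \<in> carrier_mat n n" and Y: "Y \<in> carrier_mat n n"
    and sX: "sym_mat n X" and sY: "sym_mat n Y" and pY: "pos_def_mat n Y" and K: "0 < K"
    and YX: "\<And>x. quad_form n Y x \<le> K * quad_form n X x"
    and XY: "\<And>x. quad_form n X x \<le> K * quad_form n Y x"
  shows "det Y \<le> K ^ n * det X \<and> det X \<le> K ^ n * det Y"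
proof
  show "det Y \<le> K ^ n * det X" by (rule det_le_of_quad_form_le[OF X Y sX sY pY K YX])
  have "pos_def_mat n X"
    unfolding pos_def_mat_def
  proof (intro allI impI)
    fix x :: "nat \<Rightarrow> real" assume "\<exists>i<n. x i \<noteq> 0"
    then have "0 < quad_form n Y x" using pY unfolding pos_def_mat_def by blast
    then show "0 < quad_form n X x" using YX[of x] K zero_less_mult_pos[of K "quad_form n X x"] by linarith
  qed
  then show "det X \<le> K ^ n * det Y" by (rule det_le_of_quad_form_le[OF Y X sY sX _ K XY])
qed

lemma pick_atLeastLessThan: "a + c < b \<Longrightarrow> pick {a..<b} c = a + c"
proof (induction c)
  case 0 then show ?case by (auto intro!: Least_equality)
next
  case (Suc c)
  then have "pick {a..<b} c = a + c" by simp
  then show ?case using Suc.prems by (auto intro!: Least_equality)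
qed

lemma (in vec_space) rank_lt_of_not_distinct_cols:
  assumes "A \<in> carrier_mat n nc" and "\<not> distinct (cols A)"
  shows "rank A < nc"
proof -
  obtain S where "maximal S (\<lambda>T. T \<subseteq> set (cols A) \<and> lin_indpt T)"
    using maximal_exists[of "(\<lambda>T. T \<subseteq> set (cols A) \<and> lin_indpt T)" "card (set (cols A))" "{}"]
    by (meson List.finite_set card_mono empty_iff empty_subsetI finite_lin_indpt2 rev_finite_subset)
  then have "card S \<le> card (set (cols A))" by (simp add: card_mono maximal_def)
  then have "card S < nc"
    using assms(1) cols_length card_length \<open>\<not> distinct (cols A)\<close> card_distinct carrier_matD(2) nat_less_le
    by (metis dual_order.antisym dual_order.trans)
  then show ?thesis
    using rank_card_indpt[OF \<open>A \<in> carrier_mat n nc\<close> \<open>maximal S (\<lambda>T. T \<subseteq> set (cols A) \<and> lin_indpt T)\<close>]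
    by simp
qed

lemma full_rank_mult_vec_eq_0:
  assumes A: "(A :: real mat) \<in> carrier_mat n nc" and rk: "vec_space.rank n A = nc"
    and v: "v \<in> carrier_vec nc" and Av: "A *\<^sub>v v = 0\<^sub>v n"
  shows "v = 0\<^sub>v nc"
proof (rule ccontr)
  assume nz: "v \<noteq> 0\<^sub>v nc"
  show False
  proof (cases "distinct (cols A)")
    case True
    show False using vec_space.full_rank_lin_indpt[OF A rk True] vec_space.lin_depI[OF A v nz Av True] by blast
  next
    case False
    then show False using vec_space.rank_lt_of_not_distinct_cols[OF A False] rk by simp
  qed
qed

lemma sum_swap_inner_outer:
  "(\<Sum>i\<in>A. \<Sum>j\<in>B. \<Sum>k\<in>C. \<Sum>l\<in>D. f i j k l) = (\<Sum>k\<in>C. \<Sum>l\<in>D. \<Sum>i\<in>A. \<Sum>j\<in>B. (f i j k l :: real))"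
proof -
  have "(\<Sum>i\<in>A. \<Sum>j\<in>B. \<Sum>k\<in>C. \<Sum>l\<in>D. f i j k l) = (\<Sum>i\<in>A. \<Sum>k\<in>C. \<Sum>j\<in>B. \<Sum>l\<in>D. f i j k l)"
    by (rule sum.cong[OF refl], rule sum.swap)
  also have "\<dots> = (\<Sum>k\<in>C. \<Sum>i\<in>A. \<Sum>j\<in>B. \<Sum>l\<in>D. f i j k l)" by (rule sum.swap)
  also have "\<dots> = (\<Sum>k\<in>C. \<Sum>i\<in>A. \<Sum>l\<in>D. \<Sum>j\<in>B. f i j k l)"
    by (intro sum.cong[OF refl], rule sum.swap)
  also have "\<dots> = (\<Sum>k\<in>C. \<Sum>l\<in>D. \<Sum>i\<in>A. \<Sum>j\<in>B. f i j k l)"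
    by (rule sum.cong[OF refl], rule sum.swap)
  finally show ?thesis .
qed

text \<open>With \<open>E(s) = exp (-s F\<^sup>T)\<close> as in \<open>Emat\<close>, \<open>flow n F s x\<close> is \<open>E(s)\<^sup>T x = exp (-s F) x\<close>, which turns
  the quadratic form of \<open>covar\<close> into the integral of a quadratic form in \<open>flow\<close>.\<close>

definition flow :: "nat \<Rightarrow> (nat \<Rightarrow> nat \<Rightarrow> real) \<Rightarrow> real \<Rightarrow> (nat \<Rightarrow> real) \<Rightarrow> nat \<Rightarrow> real" where
  "flow n F s x k = (\<Sum>i<n. mexp n F (- s) k i * x i)"

lemma continuous_on_mexp_neg:
  assumes "i < n" "j < n"
  shows "continuous_on S (\<lambda>s. mexp n F (- s) i j)"
  by (rule continuous_on_compose2[OF continuous_on_mexp[OF assms, where F=F and S=UNIV]]) (auto intro: continuous_intros)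

lemma continuous_on_flow: "k < n \<Longrightarrow> continuous_on S (\<lambda>s. flow n F s x k)"
  unfolding flow_def by (intro continuous_on_sum continuous_on_mult_right continuous_on_mexp_neg) auto

lemma Emat_carrier: "Bm \<in> carrier_mat n n \<Longrightarrow> Emat Bm s \<in> carrier_mat n n"
  unfolding Emat_def mat_exp_def by simp

lemma Emat_entry:
  assumes Bm: "Bm \<in> carrier_mat n n" and ik: "i < n" "k < n"
  shows "Emat Bm s $$ (i, k) = mexp n (\<lambda>a b. Bm $$ (a, b)) (- s) k i"
proof -
  let ?A = "(- s) \<cdot>\<^sub>m transpose_mat Bm"
  have A: "?A \<in> carrier_mat n n" using Bm by simp
  have "Emat Bm s $$ (i, k) = (\<Sum>m. (?A ^\<^sub>m m) $$ (i, k) / fact m)"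
    unfolding Emat_def mat_exp_def using Bm ik by simp
  also have "\<dots> = (\<Sum>m. (- s) ^ m * mpow n (\<lambda>a b. Bm $$ (a, b)) m k i / fact m)"
  proof (rule arg_cong[where f = suminf], rule ext)
    fix m
    have "(?A ^\<^sub>m m) $$ (i, k) = mpow n (\<lambda>a b. ?A $$ (a, b)) m i k" by (rule mat_pow_entry_eq_mpow[OF A ik])
    also have "\<dots> = mpow n (\<lambda>a b. (- s) * Bm $$ (b, a)) m i k"
      by (rule mpow_cong) (use Bm ik in auto)
    also have "\<dots> = (- s) ^ m * mpow n (\<lambda>a b. Bm $$ (a, b)) m k i"
      by (rule mpow_transpose_scale[OF ik])
    finally show "(?A ^\<^sub>m m) $$ (i, k) / fact m = (- s) ^ m * mpow n (\<lambda>a b. Bm $$ (a, b)) m k i / fact m"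
      by simp
  qed
  finally show ?thesis unfolding mexp_def .
qed

lemma triple_prod_transpose_entry:
  assumes E: "E \<in> carrier_mat n n" and A: "A \<in> carrier_mat n n" and ij: "i < n" "j < n"
  shows "(E * A * transpose_mat E) $$ (i, j) = (\<Sum>k<n. \<Sum>l<n. E $$ (i, k) * A $$ (k, l) * E $$ (j, l))"
proof -
  have EA: "E * A \<in> carrier_mat n n" using E A by simp
  have "(E * A * transpose_mat E) $$ (i, j) = (\<Sum>l<n. (E * A) $$ (i, l) * E $$ (j, l))"
    using EA E ij by (auto simp: scalar_prod_def atLeast0LessThan intro!: sum.cong)
  also have "\<dots> = (\<Sum>l<n. (\<Sum>k<n. E $$ (i, k) * A $$ (k, l)) * E $$ (j, l))"
    by (intro sum.cong refl) (use E A ij in \<open>simp add: scalar_prod_def atLeast0LessThan\<close>)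
  also have "\<dots> = (\<Sum>k<n. \<Sum>l<n. E $$ (i, k) * A $$ (k, l) * E $$ (j, l))"
    by (simp add: sum_distrib_right) (rule sum.swap)
  finally show ?thesis .
qed

lemma covar_carrier: "covar n Bm A t \<in> carrier_mat n n"
  unfolding covar_def by simp

lemma covar_entry:
  assumes Bm: "Bm \<in> carrier_mat n n" and A: "A \<in> carrier_mat n n" and ij: "i < n" "j < n"
  shows "covar n Bm A t $$ (i, j) = integral {0..t} (\<lambda>s. \<Sum>k<n. \<Sum>l<n.
      mexp n (\<lambda>a b. Bm $$ (a, b)) (- s) k i * A $$ (k, l) * mexp n (\<lambda>a b. Bm $$ (a, b)) (- s) l j)"
  unfolding covar_def using ij
  by (simp add: triple_prod_transpose_entry[OF Emat_carrier[OF Bm] A ij] Emat_entry[OF Bm])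

lemma sym_mat_covar:
  assumes Bm: "Bm \<in> carrier_mat n n" and A: "A \<in> carrier_mat n n" and sy: "sym_mat n A"
  shows "sym_mat n (covar n Bm A t)"
  unfolding sym_mat_def
proof (intro allI impI)
  fix i j assume ij: "i < n" "j < n"
  let ?e = "mexp n (\<lambda>a b. Bm $$ (a, b))"
  have "(\<lambda>s. \<Sum>k<n. \<Sum>l<n. ?e (- s) k i * A $$ (k, l) * ?e (- s) l j)
      = (\<lambda>s. \<Sum>l<n. \<Sum>k<n. ?e (- s) l j * A $$ (l, k) * ?e (- s) k i)"
  proof (rule ext)
    fix s
    have "(\<Sum>k<n. \<Sum>l<n. ?e (- s) k i * A $$ (k, l) * ?e (- s) l j)
        = (\<Sum>k<n. \<Sum>l<n. ?e (- s) l j * A $$ (l, k) * ?e (- s) k i)"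
      by (intro sum.cong refl) (use sy in \<open>auto simp: sym_mat_def mult_ac\<close>)
    also have "\<dots> = (\<Sum>l<n. \<Sum>k<n. ?e (- s) l j * A $$ (l, k) * ?e (- s) k i)" by (rule sum.swap)
    finally show "(\<Sum>k<n. \<Sum>l<n. ?e (- s) k i * A $$ (k, l) * ?e (- s) l j)
        = (\<Sum>l<n. \<Sum>k<n. ?e (- s) l j * A $$ (l, k) * ?e (- s) k i)" .
  qed
  then show "covar n Bm A t $$ (i, j) = covar n Bm A t $$ (j, i)"
    unfolding covar_entry[OF Bm A ij] covar_entry[OF Bm A ij(2,1)] by simp
qed

lemma quad_form_covar:
  assumes Bm: "Bm \<in> carrier_mat n n" and A: "A \<in> carrier_mat n n"
  shows "quad_form n (covar n Bm A t) x = integral {0..t} (\<lambda>s. \<Sum>k<n. \<Sum>l<n.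
      A $$ (k, l) * flow n (\<lambda>a b. Bm $$ (a, b)) s x k * flow n (\<lambda>a b. Bm $$ (a, b)) s x l)"
proof -
  let ?e = "mexp n (\<lambda>a b. Bm $$ (a, b))"
  define g where "g i j s = (\<Sum>k<n. \<Sum>l<n. ?e (- s) k i * A $$ (k, l) * ?e (- s) l j)" for i j s
  have gi: "(\<lambda>s. g i j s * x i * x j) integrable_on {0..t}" if "i < n" "j < n" for i j
    unfolding g_def
    by (intro integrable_continuous_real continuous_intros continuous_on_mexp_neg) (use that in auto)
  have "quad_form n (covar n Bm A t) x = (\<Sum>i<n. \<Sum>j<n. integral {0..t} (g i j) * x i * x j)"
    unfolding quad_form_def g_def by (intro sum.cong refl) (simp add: covar_entry[OF Bm A])
  also have "\<dots> = (\<Sum>i<n. \<Sum>j<n. integral {0..t} (\<lambda>s. g i j s * x i * x j))"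
    by (simp add: mult.assoc)
  also have "\<dots> = (\<Sum>i<n. integral {0..t} (\<lambda>s. \<Sum>j<n. g i j s * x i * x j))"
    by (intro sum.cong refl integral_sum[symmetric]) (use gi in auto)
  also have "\<dots> = integral {0..t} (\<lambda>s. \<Sum>i<n. \<Sum>j<n. g i j s * x i * x j)"
    by (intro integral_sum[symmetric] integrable_sum) (use gi in auto)
  also have "\<dots> = integral {0..t} (\<lambda>s. \<Sum>k<n. \<Sum>l<n.
      A $$ (k, l) * flow n (\<lambda>a b. Bm $$ (a, b)) s x k * flow n (\<lambda>a b. Bm $$ (a, b)) s x l)"
  proof (rule arg_cong[where f = "integral {0..t}"], rule ext)
    fix s
    have "(\<Sum>i<n. \<Sum>j<n. g i j s * x i * x j)
        = (\<Sum>i<n. \<Sum>j<n. \<Sum>k<n. \<Sum>l<n. A $$ (k, l) * (?e (- s) k i * x i) * (?e (- s) l j * x j))"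
      unfolding g_def by (simp add: sum_distrib_left sum_distrib_right mult_ac)
    also have "\<dots> = (\<Sum>k<n. \<Sum>l<n. \<Sum>i<n. \<Sum>j<n. A $$ (k, l) * (?e (- s) k i * x i) * (?e (- s) l j * x j))"
      by (rule sum_swap_inner_outer)
    also have "\<dots> = (\<Sum>k<n. \<Sum>l<n. A $$ (k, l) * flow n (\<lambda>a b. Bm $$ (a, b)) s x k * flow n (\<lambda>a b. Bm $$ (a, b)) s x l)"
      unfolding flow_def by (simp add: sum_distrib_left sum_distrib_right mult_ac)
    finally show "(\<Sum>i<n. \<Sum>j<n. g i j s * x i * x j) = (\<Sum>k<n. \<Sum>l<n.
      A $$ (k, l) * flow n (\<lambda>a b. Bm $$ (a, b)) s x k * flow n (\<lambda>a b. Bm $$ (a, b)) s x l)" .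
  qed
  finally show ?thesis .
qed

lemma double_sum_lessThan_restrict:
  fixes f :: "nat \<Rightarrow> nat \<Rightarrow> 'a::comm_monoid_add"
  assumes "m \<le> n" and "\<And>k l. k < n \<Longrightarrow> l < n \<Longrightarrow> m \<le> k \<or> m \<le> l \<Longrightarrow> f k l = 0"
  shows "(\<Sum>k<n. \<Sum>l<n. f k l) = (\<Sum>k<m. \<Sum>l<m. f k l)"
proof -
  have "(\<Sum>k<n. \<Sum>l<n. f k l) = (\<Sum>k<n. \<Sum>l<m. f k l)"
    by (rule sum.cong[OF refl], rule sum.mono_neutral_right) (use assms in auto)
  also have "\<dots> = (\<Sum>k<m. \<Sum>l<m. f k l)"
    by (rule sum.mono_neutral_right) (use assms in \<open>auto intro!: sum.neutral\<close>)
  finally show ?thesis .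
qed

lemma poly_vanishing_on_unit_interval_coeffs:
  assumes z: "\<And>u. u \<in> {0..1::real} \<Longrightarrow> (\<Sum>m\<le>r. c m * u ^ m) = 0" and m: "m \<le> r"
  shows "c m = 0"
proof -
  define P where "P = (\<Sum>m\<le>r. monom (c m) m)"
  have pv: "poly P u = (\<Sum>m\<le>r. c m * u ^ m)" for u
    unfolding P_def by (simp add: poly_sum poly_monom)
  have "P = 0"
  proof (rule ccontr)
    assume "P \<noteq> 0"
    then have "finite {x. poly P x = 0}" by (rule poly_roots_finite)
    moreover have "{0..1::real} \<subseteq> {x. poly P x = 0}" using z pv by auto
    ultimately have "finite {0..1::real}" by (rule finite_subset[rotated])
    then show False using infinite_Icc[of "0::real" 1] by simp
  qed
  then have "coeff P m = 0" by simp
  moreover have "coeff P m = c m"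
    unfolding P_def coeff_sum coeff_monom using m by simp
  ultimately show ?thesis by simp
qed

lemma covar_zero: "covar n Bm A 0 = 0\<^sub>m n n"
proof -
  have "integral {0..0::real} f = 0" for f :: "real \<Rightarrow> real"
    using integral_refl[of "0::real" f] by (simp add: cbox_interval)
  then show ?thesis by (intro eq_matI) (auto simp: covar_def)
qed

lemma power2_add_bounds:
  fixes v e :: real
  shows "v\<^sup>2 / 2 - e\<^sup>2 \<le> (v + e)\<^sup>2 \<and> (v + e)\<^sup>2 \<le> 2 * v\<^sup>2 + 2 * e\<^sup>2"
proof -
  have "(v + e)\<^sup>2 - (v\<^sup>2 / 2 - e\<^sup>2) = (v + 2 * e)\<^sup>2 / 2" "2 * v\<^sup>2 + 2 * e\<^sup>2 - (v + e)\<^sup>2 = (v - e)\<^sup>2"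
    by (simp_all add: power2_eq_square algebra_simps)
  then show ?thesis using zero_le_power2[of "v + 2 * e"] zero_le_power2[of "v - e"] by linarith
qed

lemma sum_power2_add_bounds:
  fixes v e :: "'a \<Rightarrow> real"
  shows "(\<Sum>k\<in>A. (v k)\<^sup>2) / 2 - (\<Sum>k\<in>A. (e k)\<^sup>2) \<le> (\<Sum>k\<in>A. (v k + e k)\<^sup>2)
       \<and> (\<Sum>k\<in>A. (v k + e k)\<^sup>2) \<le> 2 * (\<Sum>k\<in>A. (v k)\<^sup>2) + 2 * (\<Sum>k\<in>A. (e k)\<^sup>2)"
proof
  have "(\<Sum>k\<in>A. (v k)\<^sup>2 / 2 - (e k)\<^sup>2) \<le> (\<Sum>k\<in>A. (v k + e k)\<^sup>2)"
    using power2_add_bounds by (intro sum_mono) blast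
  then show "(\<Sum>k\<in>A. (v k)\<^sup>2) / 2 - (\<Sum>k\<in>A. (e k)\<^sup>2) \<le> (\<Sum>k\<in>A. (v k + e k)\<^sup>2)"
    by (simp add: sum_subtractf sum_divide_distrib)
  have "(\<Sum>k\<in>A. (v k + e k)\<^sup>2) \<le> (\<Sum>k\<in>A. 2 * (v k)\<^sup>2 + 2 * (e k)\<^sup>2)"
    using power2_add_bounds by (intro sum_mono) blast
  then show "(\<Sum>k\<in>A. (v k + e k)\<^sup>2) \<le> 2 * (\<Sum>k\<in>A. (v k)\<^sup>2) + 2 * (\<Sum>k\<in>A. (e k)\<^sup>2)"
    by (simp add: sum.distrib sum_distrib_left)
qed

locale block_matrix =
  fixes N :: nat and B :: "real mat" and r :: nat and p :: "nat \<Rightarrow> nat"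
  assumes bs: "block_structure N B r p"
begin

abbreviation off :: "nat \<Rightarrow> nat" where "off \<equiv> blk_off p"

definition blk_of :: "nat \<Rightarrow> nat" where "blk_of i = (LEAST k. i < off (Suc k))"

lemma B_carrier: "B \<in> carrier_mat N N" using bs unfolding block_structure_def by simp

lemma off_Suc: "off (Suc k) = off k + p k" unfolding blk_off_def by simp

lemma off_mono: "k \<le> k' \<Longrightarrow> off k \<le> off k'"
  unfolding blk_off_def by (intro sum_mono2) auto

lemma off_0: "off 0 = 0" unfolding blk_off_def by simp

lemma off_r: "off (Suc r) = N"
  using bs unfolding block_structure_def blk_off_def by (simp add: lessThan_Suc_atMost)

lemma blk_of_bounds:
  assumes "i < N"
  shows "blk_of i \<le> r" "off (blk_of i) \<le> i" "i < off (Suc (blk_of i))"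
proof -
  have w: "i < off (Suc r)" using assms off_r by simp
  show "blk_of i \<le> r" unfolding blk_of_def by (rule Least_le[of "\<lambda>k. i < off (Suc k)", OF w])
  show "i < off (Suc (blk_of i))" unfolding blk_of_def by (rule LeastI[of "\<lambda>k. i < off (Suc k)", OF w])
  show "off (blk_of i) \<le> i"
  proof (cases "blk_of i")
    case 0 then show ?thesis by (simp add: off_0)
  next
    case (Suc k)
    have "\<not> i < off (Suc k)" using not_less_Least[of k "\<lambda>k. i < off (Suc k)"] Suc unfolding blk_of_def by simp
    then show ?thesis using Suc by simp
  qed
qed

lemma blk_of_eqI:
  assumes "off k \<le> i" "i < off (Suc k)" and iN: "i < N"
  shows "blk_of i = k"
proof -
  note b = blk_of_bounds[OF iN]
  show ?thesis
  proof (rule ccontr)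
    assume "blk_of i \<noteq> k"
    then consider "blk_of i < k" | "k < blk_of i" by linarith
    then show False
    proof cases
      case 1 then have "off (Suc (blk_of i)) \<le> off k" by (intro off_mono) simp
      then show False using b assms by simp
    next
      case 2 then have "off (Suc k) \<le> off (blk_of i)" by (intro off_mono) simp
      then show False using b assms by simp
    qed
  qed
qed

lemma blk_idx_iff_blk_of: "i < N \<Longrightarrow> i \<in> blk_idx p k \<longleftrightarrow> blk_of i = k"
  using blk_of_bounds[of i] blk_of_eqI[of k i] unfolding blk_idx_def by (auto simp: off_Suc)

lemma blk_of_eq_0_iff: "i < N \<Longrightarrow> blk_of i = 0 \<longleftrightarrow> i < p 0"
  using blk_of_bounds[of i] blk_of_eqI[of 0 i] by (auto simp: off_Suc off_0)

lemma blk_idx_N: "k \<le> r \<Longrightarrow> {x. x < N \<and> x \<in> blk_idx p k} = blk_idx p k"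
  using off_mono[of "Suc k" "Suc r"] off_r unfolding blk_idx_def by (auto simp: off_Suc)

lemma card_blk: "k \<le> r \<Longrightarrow> card {x. x < N \<and> x \<in> blk_idx p k} = p k"
  unfolding blk_idx_N by (simp add: blk_idx_def)

lemma blk_carrier: "k \<le> r \<Longrightarrow> l \<le> r \<Longrightarrow> blk B p k l \<in> carrier_mat (p k) (p l)"
  unfolding blk_def using B_carrier card_blk by (auto simp: dim_submatrix)

lemma blk_index:
  assumes "k \<le> r" "l \<le> r" "a < p k" "b < p l"
  shows "blk B p k l $$ (a, b) = B $$ (off k + a, off l + b)"
proof -
  have "blk B p k l $$ (a, b) = B $$ (pick (blk_idx p k) a, pick (blk_idx p l) b)"
    unfolding blk_def by (rule submatrix_index) (use assms B_carrier card_blk in auto)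
  also have "pick (blk_idx p k) a = off k + a" unfolding blk_idx_def by (rule pick_atLeastLessThan) (use assms in simp)
  also have "pick (blk_idx p l) b = off l + b" unfolding blk_idx_def by (rule pick_atLeastLessThan) (use assms in simp)
  finally show ?thesis .
qed

lemma B_eq_0_above_superdiag:
  assumes "i < N" "j < N" "Suc (blk_of i) < blk_of j"
  shows "B $$ (i, j) = 0"
proof -
  let ?k = "blk_of i" and ?l = "blk_of j"
  have kr: "?k \<le> r" "?l \<le> r" using blk_of_bounds assms by auto
  have z: "blk B p ?k ?l = 0\<^sub>m (p ?k) (p ?l)"
    using bs kr assms(3) unfolding block_structure_def by blast
  have a: "i - off ?k < p ?k" "j - off ?l < p ?l"
    using blk_of_bounds[OF assms(1)] blk_of_bounds[OF assms(2)] by (auto simp: off_Suc)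
  have "B $$ (i, j) = blk B p ?k ?l $$ (i - off ?k, j - off ?l)"
    using blk_index[OF kr a] blk_of_bounds[OF assms(1)] blk_of_bounds[OF assms(2)] by simp
  then show ?thesis unfolding z using a by simp
qed

definition Bf :: "nat \<Rightarrow> nat \<Rightarrow> real" where "Bf a b = B $$ (a, b)"
definition B0f :: "nat \<Rightarrow> nat \<Rightarrow> real" where "B0f a b = B0_of N B r p $$ (a, b)"

lemma B0f_eq:
  assumes "i < N" "j < N"
  shows "B0f i j = (if blk_of j = Suc (blk_of i) then Bf i j else 0)"
proof -
  have "(\<exists>k<r. i \<in> blk_idx p k \<and> j \<in> blk_idx p (Suc k)) \<longleftrightarrow> blk_of j = Suc (blk_of i)"
    using blk_idx_iff_blk_of[OF assms(1)] blk_idx_iff_blk_of[OF assms(2)] blk_of_bounds[OF assms(2)] by auto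
  then show ?thesis unfolding B0f_def Bf_def B0_of_def using assms by simp
qed

definition fmult :: "(nat \<Rightarrow> nat \<Rightarrow> real) \<Rightarrow> (nat \<Rightarrow> real) \<Rightarrow> nat \<Rightarrow> real" where
  "fmult F y i = (\<Sum>l<N. F i l * y l)"

fun fpow_mult :: "(nat \<Rightarrow> nat \<Rightarrow> real) \<Rightarrow> nat \<Rightarrow> (nat \<Rightarrow> real) \<Rightarrow> nat \<Rightarrow> real" where
  "fpow_mult F 0 y = y"
| "fpow_mult F (Suc m) y = fmult F (fpow_mult F m y)"

lemma fpow_mult_Suc_right: "fpow_mult F (Suc m) y = fpow_mult F m (fmult F y)"
  by (induction m) auto

lemma mpow_sum_eq_fpow_mult: "i < N \<Longrightarrow> (\<Sum>j<N. mpow N F m i j * y j) = fpow_mult F m y i"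
proof (induction m arbitrary: i)
  case 0
  have "(\<Sum>j<N. mpow N F 0 i j * y j) = (\<Sum>j<N. if j = i then y j else 0)"
    by (rule sum.cong) auto
  then show ?case using 0 by simp
next
  case (Suc m)
  have "(\<Sum>j<N. mpow N F (Suc m) i j * y j) = (\<Sum>j<N. \<Sum>l<N. F i l * mpow N F m l j * y j)"
    by (intro sum.cong refl) (simp add: mpow_Suc_left[OF Suc.prems] sum_distrib_right mult.assoc del: mpow.simps)
  also have "\<dots> = (\<Sum>l<N. F i l * (\<Sum>j<N. mpow N F m l j * y j))"
    by (subst sum.swap) (simp add: sum_distrib_left mult.assoc)
  also have "\<dots> = (\<Sum>l<N. F i l * fpow_mult F m y l)"
    by (intro sum.cong refl) (simp add: Suc.IH)
  finally show ?case by (simp add: fmult_def)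
qed

lemma fmult_B0f_eq_blk:
  assumes iN: "i < N" and k: "blk_of i = k" "k < r"
  shows "fmult B0f y i = (blk B p k (Suc k) *\<^sub>v vec (p (Suc k)) (\<lambda>b. y (off (Suc k) + b))) $ (i - off k)"
proof -
  have ia: "i - off k < p k" using blk_of_bounds[OF iN] k by (auto simp: off_Suc)
  have "fmult B0f y i = (\<Sum>l<N. if l \<in> {off (Suc k)..<off (Suc k) + p (Suc k)} then Bf i l * y l else 0)"
    unfolding fmult_def
    by (intro sum.cong refl) (use iN in \<open>simp add: B0f_eq k(1) blk_idx_iff_blk_of[symmetric] blk_idx_def\<close>)
  also have "\<dots> = (\<Sum>l\<in>{off (Suc k)..<off (Suc k) + p (Suc k)}. Bf i l * y l)"
  proof -
    have "{off (Suc k)..<off (Suc k) + p (Suc k)} \<subseteq> {..<N}"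
      using off_mono[of "Suc (Suc k)" "Suc r"] off_r k by (auto simp: off_Suc)
    then have e: "{..<N} \<inter> {off (Suc k)..<off (Suc k) + p (Suc k)} = {off (Suc k)..<off (Suc k) + p (Suc k)}"
      by blast
    show ?thesis unfolding sum.inter_restrict[OF finite_lessThan, symmetric] e ..
  qed
  also have "\<dots> = (\<Sum>b\<in>{0..<p (Suc k)}. Bf i (b + off (Suc k)) * y (b + off (Suc k)))"
    using sum.shift_bounds_nat_ivl[of "\<lambda>l. Bf i l * y l" 0 "off (Suc k)" "p (Suc k)"] by (simp add: add.commute)
  also have "\<dots> = (blk B p k (Suc k) *\<^sub>v vec (p (Suc k)) (\<lambda>b. y (off (Suc k) + b))) $ (i - off k)"
    using blk_carrier[of k "Suc k"] k ia blk_of_bounds[OF iN]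
    by (auto simp: scalar_prod_def blk_index Bf_def add.commute intro!: sum.cong)
  finally show ?thesis .
qed

lemma fpow_mult_B0f_vanish: "i < N \<Longrightarrow> r < blk_of i + m \<Longrightarrow> fpow_mult B0f m y i = 0"
proof (induction m arbitrary: i)
  case 0 then show ?case using blk_of_bounds by force
next
  case (Suc m)
  have "fpow_mult B0f (Suc m) y i = (\<Sum>l<N. B0f i l * fpow_mult B0f m y l)" by (simp add: fmult_def)
  also have "\<dots> = 0"
    by (rule sum.neutral) (use Suc in \<open>auto simp: B0f_eq\<close>)
  finally show ?case .
qed

lemma blk_rank: "k < r \<Longrightarrow> vec_space.rank (p k) (blk B p k (Suc k)) = p (Suc k)"
  using bs unfolding block_structure_def by blast

text \<open>This is where the rank condition enters: each \<open>B\<^sub>k\<close> is injective, so block \<open>j\<close> of \<open>y\<close> is determined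
  by block \<open>0\<close> of \<open>B\<^sub>0\<^sup>j y\<close>.\<close>

lemma B0f_chain_injective:
  assumes "j \<le> r" and "\<And>i. i < N \<Longrightarrow> blk_of i = 0 \<Longrightarrow> fpow_mult B0f j y i = 0"
    and "i < N" and "blk_of i = j"
  shows "y i = 0"
  using assms
proof (induction j arbitrary: y i)
  case 0 then show ?case by simp
next
  case (Suc j)
  define y' where "y' = fmult B0f y"
  have y'0: "y' i' = 0" if "i' < N" "blk_of i' = j" for i'
    by (rule Suc.IH[of y' i']) (use Suc.prems that in \<open>auto simp: y'_def fpow_mult_Suc_right[symmetric]\<close>)
  define v where "v = vec (p (Suc j)) (\<lambda>b. y (off (Suc j) + b))"
  have jr: "j < r" using Suc.prems by simp
  have "blk B p j (Suc j) *\<^sub>v v = 0\<^sub>v (p j)"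
  proof (rule eq_vecI)
    show "dim_vec (blk B p j (Suc j) *\<^sub>v v) = dim_vec (0\<^sub>v (p j))"
      using blk_carrier[of j "Suc j"] jr by simp
    fix a assume "a < dim_vec (0\<^sub>v (p j))"
    then have a: "a < p j" by simp
    have iN: "off j + a < N" using off_mono[of "Suc j" "Suc r"] off_r jr a by (simp add: off_Suc)
    have bka: "blk_of (off j + a) = j" by (rule blk_of_eqI) (use a iN in \<open>auto simp: off_Suc\<close>)
    have "(blk B p j (Suc j) *\<^sub>v v) $ a = fmult B0f y (off j + a)"
      using fmult_B0f_eq_blk[OF iN bka jr] by (simp add: v_def)
    also have "\<dots> = 0" using y'0[OF iN bka] by (simp add: y'_def)
    finally show "(blk B p j (Suc j) *\<^sub>v v) $ a = 0\<^sub>v (p j) $ a" using a by simp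
  qed
  then have v0: "v = 0\<^sub>v (p (Suc j))"
    by (intro full_rank_mult_vec_eq_0[OF blk_carrier blk_rank[OF jr]]) (use jr in \<open>auto simp: v_def\<close>)
  have "i - off (Suc j) < p (Suc j)" using blk_of_bounds[OF Suc.prems(3)] Suc.prems(4) by (auto simp: off_Suc)
  then have "v $ (i - off (Suc j)) = 0" using v0 by simp
  then show ?case using blk_of_bounds[OF Suc.prems(3)] Suc.prems(4) \<open>i - off (Suc j) < p (Suc j)\<close>
    by (simp add: v_def)
qed

definition gram_density :: "(nat \<Rightarrow> nat \<Rightarrow> real) \<Rightarrow> real \<Rightarrow> (nat \<Rightarrow> real) \<Rightarrow> real" where
  "gram_density F s x = (\<Sum>k<p 0. (flow N F s x k)\<^sup>2)"

definition gram_form :: "(nat \<Rightarrow> nat \<Rightarrow> real) \<Rightarrow> real \<Rightarrow> (nat \<Rightarrow> real) \<Rightarrow> real" where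
  "gram_form F t x = integral {0..t} (\<lambda>s. gram_density F s x)"

lemma p0_le_N: "p 0 \<le> N"
  using off_mono[of 1 "Suc r"] off_r by (simp add: off_Suc off_0)

lemma continuous_on_gram_density: "continuous_on S (\<lambda>s. gram_density F s x)"
  unfolding gram_density_def using p0_le_N by (intro continuous_intros continuous_on_flow) auto

lemma gram_density_nonneg: "0 \<le> gram_density F s x"
  unfolding gram_density_def by (intro sum_nonneg) auto

lemma gram_form_nonneg: "0 \<le> t \<Longrightarrow> 0 \<le> gram_form F t x"
  unfolding gram_form_def by (intro integral_nonneg integrable_continuous_real continuous_on_gram_density gram_density_nonneg)

lemma B0_carrier: "B0_of N B r p \<in> carrier_mat N N"
  unfolding B0_of_def by simp

lemma B0f_lam: "(\<lambda>a b. B0_of N B r p $$ (a, b)) = B0f"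
  by (intro ext) (simp add: B0f_def)

lemma Bf_lam: "(\<lambda>a b. B $$ (a, b)) = Bf"
  by (intro ext) (simp add: Bf_def)

lemma Ip0_carrier: "Ip0 N (p 0) \<in> carrier_mat N N" unfolding Ip0_def by simp

lemma quad_form_Ctilde: "quad_form N (Ctilde N B r p t) x = gram_form B0f t x"
proof -
  have "(\<Sum>k<N. \<Sum>l<N. Ip0 N (p 0) $$ (k, l) * flow N B0f s x k * flow N B0f s x l)
      = gram_density B0f s x" for s
  proof -
    have "(\<Sum>k<N. \<Sum>l<N. Ip0 N (p 0) $$ (k, l) * flow N B0f s x k * flow N B0f s x l)
        = (\<Sum>k<p 0. \<Sum>l<p 0. (if k = l then 1 else 0) * flow N B0f s x k * flow N B0f s x l)"
      using p0_le_N by (subst double_sum_lessThan_restrict[OF p0_le_N]) (auto simp: Ip0_def intro!: sum.cong)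
    also have "\<dots> = gram_density B0f s x"
      unfolding gram_density_def
      by (rule sum.cong[OF refl]) (simp add: power2_eq_square if_distrib[where f = "\<lambda>c. c * _"] cong: if_cong)
    finally show ?thesis .
  qed
  then show ?thesis
    unfolding Ctilde_def quad_form_covar[OF B0_carrier Ip0_carrier] B0f_lam gram_form_def by simp
qed

lemma sym_mat_Ctilde: "sym_mat N (Ctilde N B r p t)"
  unfolding Ctilde_def by (rule sym_mat_covar[OF B0_carrier Ip0_carrier]) (auto simp: sym_mat_def Ip0_def)

lemma Ctilde_carrier: "Ctilde N B r p t \<in> carrier_mat N N"
  unfolding Ctilde_def by (rule covar_carrier)

lemma coef_mat_carrier: "coef_mat N (p 0) a z \<in> carrier_mat N N" unfolding coef_mat_def by simp

lemma Cmat_carrier: "Cmat N B (p 0) a z t \<in> carrier_mat N N"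
  unfolding Cmat_def by (rule covar_carrier)

lemma sym_mat_Cmat:
  assumes "\<And>i j. i < p 0 \<Longrightarrow> j < p 0 \<Longrightarrow> a i j z = a j i z"
  shows "sym_mat N (Cmat N B (p 0) a z t)"
  unfolding Cmat_def by (rule sym_mat_covar[OF B_carrier coef_mat_carrier]) (use assms in \<open>auto simp: sym_mat_def coef_mat_def\<close>)

lemma quad_form_Cmat:
  "quad_form N (Cmat N B (p 0) a z t) x
     = integral {0..t} (\<lambda>s. \<Sum>i<p 0. \<Sum>j<p 0. a i j z * flow N Bf s x i * flow N Bf s x j)"
proof -
  have "(\<Sum>k<N. \<Sum>l<N. coef_mat N (p 0) a z $$ (k, l) * flow N Bf s x k * flow N Bf s x l)
      = (\<Sum>i<p 0. \<Sum>j<p 0. a i j z * flow N Bf s x i * flow N Bf s x j)" for s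
    using p0_le_N by (subst double_sum_lessThan_restrict[OF p0_le_N])
      (auto simp: coef_mat_def intro!: sum.cong)
  then show ?thesis
    unfolding Cmat_def quad_form_covar[OF B_carrier coef_mat_carrier] Bf_lam by simp
qed

lemma quad_form_Cmat_bounds:
  assumes ell: "\<And>\<xi>. (1 / \<Lambda>) * (\<Sum>i<p 0. (\<xi> i)\<^sup>2) \<le> (\<Sum>i<p 0. \<Sum>j<p 0. a i j z * \<xi> i * \<xi> j)
       \<and> (\<Sum>i<p 0. \<Sum>j<p 0. a i j z * \<xi> i * \<xi> j) \<le> \<Lambda> * (\<Sum>i<p 0. (\<xi> i)\<^sup>2)"
  shows "(1 / \<Lambda>) * gram_form Bf t x \<le> quad_form N (Cmat N B (p 0) a z t) x
       \<and> quad_form N (Cmat N B (p 0) a z t) x \<le> \<Lambda> * gram_form Bf t x"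
proof -
  define h where "h s = (\<Sum>i<p 0. \<Sum>j<p 0. a i j z * flow N Bf s x i * flow N Bf s x j)" for s
  have q: "quad_form N (Cmat N B (p 0) a z t) x = integral {0..t} h"
    unfolding quad_form_Cmat h_def ..
  have hc: "continuous_on {0..t} h" unfolding h_def using p0_le_N
    by (intro continuous_intros continuous_on_flow) auto
  have vc: "continuous_on {0..t} (\<lambda>s. gram_density Bf s x)" by (rule continuous_on_gram_density)
  have hb: "(1 / \<Lambda>) * gram_density Bf s x \<le> h s \<and> h s \<le> \<Lambda> * gram_density Bf s x" for s
    using ell[of "\<lambda>i. flow N Bf s x i"] unfolding h_def gram_density_def by (simp add: mult.assoc)
  have i1: "(\<lambda>s. (1 / \<Lambda>) * gram_density Bf s x) integrable_on {0..t}"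
    by (intro integrable_continuous_real continuous_on_mult_left vc)
  have i2: "h integrable_on {0..t}" by (rule integrable_continuous_real[OF hc])
  have i3: "(\<lambda>s. \<Lambda> * gram_density Bf s x) integrable_on {0..t}"
    by (intro integrable_continuous_real continuous_on_mult_left vc)
  have "(1 / \<Lambda>) * gram_form Bf t x = integral {0..t} (\<lambda>s. (1 / \<Lambda>) * gram_density Bf s x)"
    unfolding gram_form_def by simp
  also have "\<dots> \<le> integral {0..t} h"
    by (rule integral_le[OF i1 i2]) (use hb in blast)
  finally have 1: "(1 / \<Lambda>) * gram_form Bf t x \<le> integral {0..t} h" .
  have "integral {0..t} h \<le> integral {0..t} (\<lambda>s. \<Lambda> * gram_density Bf s x)"
    by (rule integral_le[OF i2 i3]) (use hb in blast)
  also have "\<dots> = \<Lambda> * gram_form Bf t x" unfolding gram_form_def by simp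
  finally show ?thesis using 1 q by simp
qed

text \<open>Conjugating \<open>l\<^sup>2 B\<close> by \<open>diag (l\<^bsup>2k+1\<^esup>)\<close> (\<open>k\<close> the block index) leaves the superdiagonal
  blocks \<open>B\<^sub>0\<close> unchanged and multiplies every other nonzero block by a positive power of \<open>l\<^sup>2\<close>.\<close>

definition dil :: "real \<Rightarrow> nat \<Rightarrow> real" where "dil l i = l ^ (2 * blk_of i + 1)"

definition B_dil :: "real \<Rightarrow> nat \<Rightarrow> nat \<Rightarrow> real" where
  "B_dil l a b = l\<^sup>2 * dil l a / dil l b * Bf a b"

lemma dil_pos: "0 < l \<Longrightarrow> 0 < dil l i" unfolding dil_def by simp

lemma dil_nonzero: "0 < l \<Longrightarrow> dil l i \<noteq> 0" using dil_pos[of l i] by linarith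

lemma flow_diag_conj:
  assumes l: "0 < l" and G: "\<And>a b. a < N \<Longrightarrow> b < N \<Longrightarrow> G a b = l\<^sup>2 * dil l a / dil l b * F a b"
    and k: "k < N"
  shows "flow N F (l\<^sup>2 * u) x k = flow N G u (\<lambda>i. dil l i * x i) k / dil l k"
proof -
  have e: "mexp N F (- (l\<^sup>2 * u)) k i = dil l i / dil l k * mexp N G (- u) k i" if i: "i < N" for i
  proof -
    have "mexp N G (- u) k i = dil l k / dil l i * mexp N F (l\<^sup>2 * - u) k i"
      by (rule mexp_diag_conj[OF dil_nonzero[OF l] G k i])
    then show ?thesis using dil_pos[OF l, of i] dil_pos[OF l, of k] by (simp add: field_simps)
  qed
  have "flow N F (l\<^sup>2 * u) x k = (\<Sum>i<N. dil l i / dil l k * mexp N G (- u) k i * x i)"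
    unfolding flow_def by (intro sum.cong refl) (simp add: e)
  also have "\<dots> = (\<Sum>i<N. mexp N G (- u) k i * (dil l i * x i)) / dil l k"
    by (simp add: sum_divide_distrib mult_ac)
  finally show ?thesis unfolding flow_def .
qed

lemma B0f_dil_invariant: "0 < l \<Longrightarrow> a < N \<Longrightarrow> b < N \<Longrightarrow> B0f a b = l\<^sup>2 * dil l a / dil l b * B0f a b"
proof -
  assume l: "0 < l" and ab: "a < N" "b < N"
  show ?thesis
  proof (cases "blk_of b = Suc (blk_of a)")
    case True
    have "dil l b = l\<^sup>2 * dil l a" unfolding dil_def True by (simp add: power_add[symmetric] power2_eq_square[symmetric])
    then show ?thesis using dil_pos[OF l, of a] l by simp
  next
    case False then show ?thesis using ab by (simp add: B0f_eq)
  qed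
qed

lemma gram_form_rescale:
  assumes t: "0 < t" and G: "\<And>a b. a < N \<Longrightarrow> b < N \<Longrightarrow> G a b = (sqrt t)\<^sup>2 * dil (sqrt t) a / dil (sqrt t) b * F a b"
  shows "gram_form F t x = gram_form G 1 (\<lambda>i. dil (sqrt t) i * x i)"
proof -
  define l where "l = sqrt t"
  have l: "0 < l" "l\<^sup>2 = t" using t unfolding l_def by auto
  define y where "y = (\<lambda>i. dil l i * x i)"
  have vq: "gram_density F (t * u) x = gram_density G u y / t" for u
  proof -
    have "gram_density F (t * u) x = (\<Sum>k<p 0. (flow N G u y k / l)\<^sup>2)"
      unfolding gram_density_def
    proof (intro sum.cong refl)
      fix k assume k: "k \<in> {..<p 0}"
      then have kN: "k < N" using p0_le_N by auto
      have "dil l k = l" using blk_of_eq_0_iff[OF kN] k unfolding dil_def by simp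
      then show "(flow N F (t * u) x k)\<^sup>2 = (flow N G u y k / l)\<^sup>2"
        using flow_diag_conj[OF l(1) G[unfolded l_def[symmetric]] kN, of u x] l(2) unfolding y_def by simp
    qed
    also have "\<dots> = gram_density G u y / t" unfolding gram_density_def using l by (simp add: power_divide sum_divide_distrib)
    finally show ?thesis .
  qed
  have "integral ((\<lambda>s. s / t) ` {0..t}) (\<lambda>u. gram_density F (t * u) x) = (1 / \<bar>t\<bar>) *\<^sub>R integral {0..t} (\<lambda>s. gram_density F s x)"
    by (rule integral_stretch_real) (use t in auto)
  then have "integral {0..1} (\<lambda>u. gram_density G u y * (1 / t)) = (1 / t) * gram_form F t x"
    unfolding gram_form_def vq using t by simp
  then have "gram_form G 1 y * (1 / t) = (1 / t) * gram_form F t x"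
    unfolding gram_form_def integral_mult_left .
  then show ?thesis using t unfolding y_def l_def by simp
qed

lemma B_dil_bounds:
  assumes l: "0 < l" "l \<le> 1" and ab: "a < N" "b < N"
  shows "\<bar>B_dil l a b - B0f a b\<bar> \<le> l\<^sup>2 * entry_bound N Bf" "\<bar>B_dil l a b\<bar> \<le> entry_bound N Bf" "\<bar>B0f a b\<bar> \<le> entry_bound N Bf"
proof -
  have K: "\<bar>Bf a b\<bar> \<le> entry_bound N Bf" by (rule abs_le_entry_bound[OF ab])
  have l2: "l\<^sup>2 \<le> 1" using l by (simp add: power_le_one)
  consider "blk_of b = Suc (blk_of a)" | "blk_of b \<le> blk_of a" | "Suc (blk_of a) < blk_of b" by linarith
  then have "\<bar>B_dil l a b - B0f a b\<bar> \<le> l\<^sup>2 * \<bar>Bf a b\<bar> \<and> \<bar>B_dil l a b\<bar> \<le> \<bar>Bf a b\<bar> \<and> \<bar>B0f a b\<bar> \<le> \<bar>Bf a b\<bar>"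
  proof cases
    case 1
    have "dil l b = l\<^sup>2 * dil l a" unfolding dil_def 1 by (simp add: power_add[symmetric] power2_eq_square[symmetric])
    then have "B_dil l a b = Bf a b" unfolding B_dil_def using dil_pos[OF l(1), of a] l by simp
    then show ?thesis using 1 ab by (simp add: B0f_eq)
  next
    case 2
    define q where "q = blk_of a - blk_of b"
    have "dil l a = l ^ (2 * q) * dil l b" unfolding dil_def q_def using 2
      by (simp add: power_add[symmetric]) (metis add_mult_distrib2 le_add_diff_inverse2 add.assoc add.commute)
    then have Bl: "B_dil l a b = l\<^sup>2 * l ^ (2 * q) * Bf a b"
      unfolding B_dil_def using dil_pos[OF l(1), of b] by simp
    have lq: "l ^ (2 * q) \<le> 1" using l by (simp add: power_le_one)
    have lq0: "0 \<le> l ^ (2 * q)" using l by simp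
    have "\<bar>B_dil l a b\<bar> = l\<^sup>2 * (l ^ (2 * q) * \<bar>Bf a b\<bar>)" unfolding Bl using l by (simp add: abs_mult)
    also have "\<dots> \<le> l\<^sup>2 * (1 * \<bar>Bf a b\<bar>)"
      by (intro mult_left_mono mult_right_mono lq) auto
    finally have h: "\<bar>B_dil l a b\<bar> \<le> l\<^sup>2 * \<bar>Bf a b\<bar>" by simp
    have "B0f a b = 0" using 2 ab by (simp add: B0f_eq)
    then show ?thesis using h l2 order_trans[OF h mult_right_mono[OF l2, of "\<bar>Bf a b\<bar>"]] by simp
  next
    case 3
    have "Bf a b = 0" unfolding Bf_def by (rule B_eq_0_above_superdiag[OF ab 3])
    then show ?thesis using 3 ab by (simp add: B0f_eq B_dil_def)
  qed
  then show "\<bar>B_dil l a b - B0f a b\<bar> \<le> l\<^sup>2 * entry_bound N Bf" "\<bar>B_dil l a b\<bar> \<le> entry_bound N Bf" "\<bar>B0f a b\<bar> \<le> entry_bound N Bf"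
    using K l by (auto intro: order_trans mult_left_mono)
qed

definition pert_const :: real where "pert_const = entry_bound N Bf * exp (2 * real N * entry_bound N Bf)"

lemma flow_B_dil_perturbation:
  assumes l: "0 < l" "l \<le> 1" and u: "u \<in> {0..1}" and k: "k < N"
  shows "\<bar>flow N (B_dil l) u y k - flow N B0f u y k\<bar> \<le> l\<^sup>2 * pert_const * (\<Sum>i<N. \<bar>y i\<bar>)"
proof -
  have "\<bar>flow N (B_dil l) u y k - flow N B0f u y k\<bar> = \<bar>\<Sum>i<N. (mexp N (B_dil l) (- u) k i - mexp N B0f (- u) k i) * y i\<bar>"
    unfolding flow_def by (simp add: sum_subtractf[symmetric] algebra_simps)
  also have "\<dots> \<le> (\<Sum>i<N. \<bar>(mexp N (B_dil l) (- u) k i - mexp N B0f (- u) k i) * y i\<bar>)" by (rule sum_abs)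
  also have "\<dots> \<le> (\<Sum>i<N. l\<^sup>2 * pert_const * \<bar>y i\<bar>)"
  proof (rule sum_mono)
    fix i assume i: "i \<in> {..<N}"
    have "\<bar>mexp N (B_dil l) (- u) k i - mexp N B0f (- u) k i\<bar> \<le> l\<^sup>2 * pert_const"
      unfolding pert_const_def mult.assoc[symmetric]
      by (rule mexp_diff_abs_le[OF B_dil_bounds(2)[OF l] B_dil_bounds(3)[OF l] B_dil_bounds(1)[OF l] one_le_entry_bound k])
         (use i u in auto)
    then show "\<bar>(mexp N (B_dil l) (- u) k i - mexp N B0f (- u) k i) * y i\<bar> \<le> l\<^sup>2 * pert_const * \<bar>y i\<bar>"
      by (simp add: abs_mult mult_right_mono)
  qed
  also have "\<dots> = l\<^sup>2 * pert_const * (\<Sum>i<N. \<bar>y i\<bar>)" by (simp add: sum_distrib_left)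
  finally show ?thesis .
qed

lemma sum_abs_squared_le: "(\<Sum>i<N. \<bar>y i\<bar>)\<^sup>2 \<le> real N * (\<Sum>i<N. (y i)\<^sup>2)"
  using Cauchy_Schwarz_ineq_sum[of "\<lambda>_. 1" "\<lambda>i. \<bar>y i\<bar>" "{..<N}"] by simp

lemma flow_B_dil_sq_perturbation:
  assumes l: "0 < l" "l \<le> 1" and u: "u \<in> {0..1}" and k: "k < N"
  shows "(flow N (B_dil l) u y k - flow N B0f u y k)\<^sup>2
      \<le> real N * pert_const\<^sup>2 * l ^ 4 * (\<Sum>i<N. (y i)\<^sup>2)"
proof -
  let ?e = "flow N (B_dil l) u y k - flow N B0f u y k"
  have "?e\<^sup>2 = \<bar>?e\<bar>\<^sup>2" by simp
  also have "\<dots> \<le> (l\<^sup>2 * pert_const * (\<Sum>i<N. \<bar>y i\<bar>))\<^sup>2"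
    by (rule power_mono[OF flow_B_dil_perturbation[OF l u k]]) simp
  also have "\<dots> = (l\<^sup>2 * pert_const)\<^sup>2 * (\<Sum>i<N. \<bar>y i\<bar>)\<^sup>2"
    by (simp add: power_mult_distrib)
  also have "\<dots> \<le> (l\<^sup>2 * pert_const)\<^sup>2 * (real N * (\<Sum>i<N. (y i)\<^sup>2))"
    by (rule mult_left_mono[OF sum_abs_squared_le]) simp
  also have "\<dots> = real N * pert_const\<^sup>2 * l ^ 4 * (\<Sum>i<N. (y i)\<^sup>2)"
  proof -
    have l4: "(l\<^sup>2)\<^sup>2 = l ^ 4" by (simp flip: power_mult)
    show ?thesis by (simp add: power_mult_distrib l4 mult_ac)
  qed
  finally show ?thesis .
qed

lemma gram_density_B_dil_perturbation:
  assumes l: "0 < l" "l \<le> 1" and u: "u \<in> {0..1}"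
  defines "\<eta> \<equiv> real (p 0) * real N * pert_const\<^sup>2 * l ^ 4"
  shows "gram_density B0f u y / 2 - \<eta> * (\<Sum>i<N. (y i)\<^sup>2) \<le> gram_density (B_dil l) u y
       \<and> gram_density (B_dil l) u y \<le> 2 * gram_density B0f u y + 2 * \<eta> * (\<Sum>i<N. (y i)\<^sup>2)"
proof -
  define e where "e k = flow N (B_dil l) u y k - flow N B0f u y k" for k
  have "(\<Sum>k<p 0. (e k)\<^sup>2)
      \<le> (\<Sum>k<p 0. real N * pert_const\<^sup>2 * l ^ 4 * (\<Sum>i<N. (y i)\<^sup>2))"
    unfolding e_def by (rule sum_mono, rule flow_B_dil_sq_perturbation[OF l u]) (use p0_le_N in auto)
  then have "(\<Sum>k<p 0. (e k)\<^sup>2) \<le> \<eta> * (\<Sum>i<N. (y i)\<^sup>2)" unfolding \<eta>_def by simp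
  moreover have "flow N (B_dil l) u y k = flow N B0f u y k + e k" for k unfolding e_def by simp
  ultimately show ?thesis
    using sum_power2_add_bounds[where v = "flow N B0f u y" and e = e and A = "{..<p 0}"] unfolding gram_density_def by simp
qed

lemma mpow_B0f_nilpotent:
  assumes ij: "i < N" "j < N" and m: "r < m"
  shows "mpow N B0f m i j = 0"
proof -
  have "mpow N B0f m i j = (\<Sum>l<N. mpow N B0f m i l * (if l = j then 1 else 0))"
  proof -
    have "(\<Sum>l<N. mpow N B0f m i l * (if l = j then 1 else 0)) = (\<Sum>l<N. if l = j then mpow N B0f m i l else 0)"
      by (rule sum.cong) auto
    then show ?thesis using ij by simp
  qed
  also have "\<dots> = fpow_mult B0f m (\<lambda>l. if l = j then 1 else 0) i" by (rule mpow_sum_eq_fpow_mult[OF ij(1)])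
  also have "\<dots> = 0" by (rule fpow_mult_B0f_vanish[OF ij(1)]) (use m in simp)
  finally show ?thesis .
qed

lemma mexp_B0f_finite_sum:
  assumes ij: "i < N" "j < N"
  shows "mexp N B0f s i j = (\<Sum>m\<le>r. s ^ m * mpow N B0f m i j / fact m)"
  unfolding mexp_def by (rule suminf_finite) (auto simp: mpow_B0f_nilpotent[OF ij])

lemma flow_B0f_polynomial:
  assumes k: "k < N"
  shows "flow N B0f u y k = (\<Sum>m\<le>r. ((-1) ^ m / fact m * fpow_mult B0f m y k) * u ^ m)"
proof -
  have "flow N B0f u y k = (\<Sum>i<N. \<Sum>m\<le>r. (- u) ^ m / fact m * (mpow N B0f m k i * y i))"
    unfolding flow_def by (intro sum.cong refl) (simp add: mexp_B0f_finite_sum[OF k] sum_distrib_right mult.assoc)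
  also have "\<dots> = (\<Sum>m\<le>r. \<Sum>i<N. (- u) ^ m / fact m * (mpow N B0f m k i * y i))" by (rule sum.swap)
  also have "\<dots> = (\<Sum>m\<le>r. (- u) ^ m / fact m * fpow_mult B0f m y k)"
  proof (intro sum.cong refl)
    fix m
    have "(\<Sum>i<N. (- u) ^ m / fact m * (mpow N B0f m k i * y i)) = (- u) ^ m / fact m * (\<Sum>i<N. mpow N B0f m k i * y i)"
      by (rule sum_distrib_left[symmetric])
    then show "(\<Sum>i<N. (- u) ^ m / fact m * (mpow N B0f m k i * y i)) = (- u) ^ m / fact m * fpow_mult B0f m y k"
      using mpow_sum_eq_fpow_mult[OF k, of B0f m y] by simp
  qed
  also have "\<dots> = (\<Sum>m\<le>r. ((-1) ^ m / fact m * fpow_mult B0f m y k) * u ^ m)"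
  proof (intro sum.cong refl)
    fix m
    have pm: "(- u) ^ m = (-1) ^ m * u ^ m" by (rule power_minus)
    show "(- u) ^ m / fact m * fpow_mult B0f m y k = ((-1) ^ m / fact m * fpow_mult B0f m y k) * u ^ m"
      unfolding pm by (simp add: field_simps)
  qed
  finally show ?thesis .
qed

lemma flow_eq_0_of_gram_form_eq_0:
  assumes K0: "gram_form F 1 y = 0" and u: "u \<in> {0..1}" and k: "k < p 0"
  shows "flow N F u y k = 0"
proof -
  have gc: "continuous_on {0..1} (\<lambda>u. gram_density F u y)" by (rule continuous_on_gram_density)
  have "((\<lambda>u. gram_density F u y) has_integral 0) (cbox 0 1)"
    using integrable_integral[OF integrable_continuous_real[OF gc]] K0
    unfolding gram_form_def cbox_interval by simp
  then have "gram_density F u y = 0"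
    by (rule has_integral_0_cbox_imp_0[rotated 2])
       (use gc u gram_density_nonneg in \<open>auto simp: cbox_interval box_real\<close>)
  then show ?thesis using k unfolding gram_density_def by (simp add: sum_nonneg_eq_0_iff)
qed

lemma fpow_mult_B0f_eq_0_of_gram_form_eq_0:
  assumes K0: "gram_form B0f 1 y = 0" and m: "m \<le> r" and k: "k < p 0"
  shows "fpow_mult B0f m y k = 0"
proof -
  have "(-1) ^ m / fact m * fpow_mult B0f m y k = 0"
  proof (rule poly_vanishing_on_unit_interval_coeffs[OF _ m])
    fix u :: real assume "u \<in> {0..1}"
    then show "(\<Sum>m\<le>r. ((-1) ^ m / fact m * fpow_mult B0f m y k) * u ^ m) = 0"
      using flow_B0f_polynomial[of k u y] flow_eq_0_of_gram_form_eq_0[OF K0 _ k] k p0_le_N by simp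
  qed
  then show ?thesis by simp
qed

lemma pos_def_mat_Ctilde_1: "pos_def_mat N (Ctilde N B r p 1)"
  unfolding pos_def_mat_def quad_form_Ctilde
proof (intro allI impI)
  fix y :: "nat \<Rightarrow> real" assume "\<exists>i<N. y i \<noteq> 0"
  then obtain i0 where i0: "i0 < N" "y i0 \<noteq> 0" by auto
  show "0 < gram_form B0f 1 y"
  proof (rule ccontr)
    assume "\<not> 0 < gram_form B0f 1 y"
    then have K0: "gram_form B0f 1 y = 0" using gram_form_nonneg[of 1 B0f y] by simp
    have "y i0 = 0"
    proof (rule B0f_chain_injective[of "blk_of i0" y i0])
      show "blk_of i0 \<le> r" using blk_of_bounds[OF i0(1)] by simp
      show "fpow_mult B0f (blk_of i0) y i = 0" if "i < N" "blk_of i = 0" for i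
        using that blk_of_eq_0_iff fpow_mult_B0f_eq_0_of_gram_form_eq_0[OF K0 \<open>blk_of i0 \<le> r\<close>] by blast
    qed (use i0 in simp_all)
    then show False using i0 by simp
  qed
qed

lemma gram_form_B_dil_perturbation:
  assumes l: "0 < l" "l \<le> 1"
  defines "\<eta> \<equiv> real (p 0) * real N * pert_const\<^sup>2 * l ^ 4"
  shows "gram_form B0f 1 y / 2 - \<eta> * (\<Sum>i<N. (y i)\<^sup>2) \<le> gram_form (B_dil l) 1 y
       \<and> gram_form (B_dil l) 1 y \<le> 2 * gram_form B0f 1 y + 2 * \<eta> * (\<Sum>i<N. (y i)\<^sup>2)"
proof -
  define S where "S = (\<Sum>i<N. (y i)\<^sup>2)"
  have c0: "continuous_on {0..1} (\<lambda>u. gram_density B0f u y)" "continuous_on {0..1} (\<lambda>u. gram_density (B_dil l) u y)"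
    by (rule continuous_on_gram_density)+
  have i0: "(\<lambda>u. gram_density B0f u y) integrable_on {0..1}" by (rule integrable_continuous_real[OF c0(1)])
  have i1: "(\<lambda>u. gram_density (B_dil l) u y) integrable_on {0..1}" by (rule integrable_continuous_real[OF c0(2)])
  have ia: "(\<lambda>u. gram_density B0f u y / 2 - \<eta> * S) integrable_on {0..1}"
    by (intro integrable_continuous_real continuous_intros c0) auto
  have ib: "(\<lambda>u. 2 * gram_density B0f u y + 2 * \<eta> * S) integrable_on {0..1}"
    by (intro integrable_continuous_real continuous_intros c0)
  have icon: "(\<lambda>u. C) integrable_on {0..1::real}" for C :: real
    by (rule integrable_continuous_real) (rule continuous_on_const)
  have int_lower: "integral {0..1} (\<lambda>u. gram_density B0f u y / 2 - \<eta> * S) = gram_form B0f 1 y / 2 - \<eta> * S"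
    using Henstock_Kurzweil_Integration.integral_diff[of "\<lambda>u. gram_density B0f u y / 2" "{0..1::real}" "\<lambda>u. \<eta> * S"]
      i0 icon[of "\<eta> * S"] by (simp add: gram_form_def)
  have int_upper: "integral {0..1} (\<lambda>u. 2 * gram_density B0f u y + 2 * \<eta> * S) = 2 * gram_form B0f 1 y + 2 * \<eta> * S"
    using Henstock_Kurzweil_Integration.integral_add[of "\<lambda>u. 2 * gram_density B0f u y" "{0..1::real}" "\<lambda>u. 2 * \<eta> * S"]
      i0 icon[of "2 * \<eta> * S"] by (simp add: gram_form_def)
  have pointwise: "gram_density B0f u y / 2 - \<eta> * S \<le> gram_density (B_dil l) u y \<and> gram_density (B_dil l) u y \<le> 2 * gram_density B0f u y + 2 * \<eta> * S"
    if "u \<in> {0..1}" for u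
    using gram_density_B_dil_perturbation[OF l that, of y] unfolding \<eta>_def S_def by simp
  have l1: "integral {0..1} (\<lambda>u. gram_density B0f u y / 2 - \<eta> * S) \<le> gram_form (B_dil l) 1 y"
    unfolding gram_form_def by (rule integral_le[OF ia i1]) (use pointwise in blast)
  have l2: "gram_form (B_dil l) 1 y \<le> integral {0..1} (\<lambda>u. 2 * gram_density B0f u y + 2 * \<eta> * S)"
    unfolding gram_form_def by (rule integral_le[OF i1 ib]) (use pointwise in blast)
  have "gram_form B0f 1 y / 2 - \<eta> * S \<le> gram_form (B_dil l) 1 y" using l1 unfolding int_lower .
  moreover have "gram_form (B_dil l) 1 y \<le> 2 * gram_form B0f 1 y + 2 * \<eta> * S" using l2 unfolding int_upper .
  ultimately show ?thesis unfolding S_def by simp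
qed

lemma gram_form_zero: "gram_form F 0 x = 0"
  unfolding gram_form_def using integral_refl[of "0::real"] by (simp add: cbox_interval)

lemma pos_def_mat_Ctilde:
  assumes t: "0 < t"
  shows "pos_def_mat N (Ctilde N B r p t)"
  unfolding pos_def_mat_def quad_form_Ctilde
proof (intro allI impI)
  fix x :: "nat \<Rightarrow> real" assume "\<exists>i<N. x i \<noteq> 0"
  then obtain i where i: "i < N" "x i \<noteq> 0" by blast
  have "\<exists>j<N. dil (sqrt t) j * x j \<noteq> 0" using i dil_nonzero[of "sqrt t" i] t by auto
  then have "0 < quad_form N (Ctilde N B r p 1) (\<lambda>j. dil (sqrt t) j * x j)"
    by (rule pos_def_mat_Ctilde_1[unfolded pos_def_mat_def, rule_format])
  moreover have "gram_form B0f t x = gram_form B0f 1 (\<lambda>j. dil (sqrt t) j * x j)"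
    by (rule gram_form_rescale[OF t]) (rule B0f_dil_invariant, use t in auto)
  ultimately show "0 < gram_form B0f t x" unfolding quad_form_Ctilde by simp
qed

lemma gram_form_comparable_small_time:
  "\<exists>T>0. \<forall>t x. 0 \<le> t \<longrightarrow> t \<le> T \<longrightarrow>
      gram_form B0f t x / 4 \<le> gram_form Bf t x \<and> gram_form Bf t x \<le> 3 * gram_form B0f t x"
proof -
  obtain c where c: "0 < c" "\<And>y. c * (\<Sum>i<N. (y i)\<^sup>2) \<le> quad_form N (Ctilde N B r p 1) y"
    using pos_def_mat_coercive[OF Ctilde_carrier sym_mat_Ctilde pos_def_mat_Ctilde_1] by blast
  have cK: "c * (\<Sum>i<N. (y i)\<^sup>2) \<le> gram_form B0f 1 y" for y using c(2)[of y] quad_form_Ctilde by simp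
  define D where "D = real (p 0) * real N * pert_const\<^sup>2"
  have D0: "0 \<le> D" unfolding D_def by simp
  define T where "T = min 1 (c / (4 * D + 1))"
  have T0: "0 < T" unfolding T_def using c(1) D0 by simp
  have cmp: "gram_form B0f t x / 4 \<le> gram_form Bf t x \<and> gram_form Bf t x \<le> 3 * gram_form B0f t x"
    if t: "0 < t" "t \<le> T" for t x
  proof -
    define l where "l = sqrt t"
    have t1: "t \<le> 1" using t unfolding T_def by simp
    have l: "0 < l" "l \<le> 1" using t t1 unfolding l_def by auto
    have l4: "l ^ 4 = t\<^sup>2" unfolding l_def using t
      by (metis less_imp_le power_mult real_sqrt_pow2 numeral_Bit0_eq_double mult_2_right power2_eq_square
          power_add numeral_Bit0)
    define y where "y = (\<lambda>i. dil l i * x i)"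
    define S where "S = (\<Sum>i<N. (y i)\<^sup>2)"
    have S0: "0 \<le> S" unfolding S_def by (intro sum_nonneg) auto
    define \<eta> where "\<eta> = real (p 0) * real N * pert_const\<^sup>2 * l ^ 4"
    have "\<eta> = D * t\<^sup>2" unfolding \<eta>_def D_def l4 ..
    also have "\<dots> \<le> D * t" using D0 t t1 by (intro mult_left_mono) (auto simp: power2_eq_square mult_le_cancel_left1)
    also have "\<dots> \<le> D * (c / (4 * D + 1))"
      using t D0 unfolding T_def by (intro mult_left_mono) auto
    also have "\<dots> \<le> c / 4"
      using D0 c(1) by (simp add: field_simps)
    finally have "\<eta> * S \<le> c / 4 * S" using S0 by (rule mult_right_mono)
    moreover have "gram_form Bf t x = gram_form (B_dil l) 1 y"
      unfolding y_def l_def by (rule gram_form_rescale[OF t(1)]) (simp add: B_dil_def)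
    moreover have "gram_form B0f t x = gram_form B0f 1 y"
      unfolding y_def l_def by (rule gram_form_rescale[OF t(1)]) (rule B0f_dil_invariant, use t in auto)
    moreover have "c * S \<le> gram_form B0f 1 y" unfolding S_def by (rule cK)
    moreover have "gram_form B0f 1 y / 2 - \<eta> * S \<le> gram_form (B_dil l) 1 y
        \<and> gram_form (B_dil l) 1 y \<le> 2 * gram_form B0f 1 y + 2 * \<eta> * S"
      unfolding \<eta>_def S_def by (rule gram_form_B_dil_perturbation[OF l])
    ultimately show ?thesis by linarith
  qed
  show ?thesis
    by (rule exI[of _ T], use T0 cmp gram_form_zero in \<open>auto simp: le_less\<close>)
qed

lemma quad_form_Cmat_Ctilde_comparable:
  assumes ell: "\<And>\<xi>. (1 / \<Lambda>) * (\<Sum>i<p 0. (\<xi> i)\<^sup>2) \<le> (\<Sum>i<p 0. \<Sum>j<p 0. a i j z * \<xi> i * \<xi> j)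
       \<and> (\<Sum>i<p 0. \<Sum>j<p 0. a i j z * \<xi> i * \<xi> j) \<le> \<Lambda> * (\<Sum>i<p 0. (\<xi> i)\<^sup>2)"
    and Lam: "1 \<le> \<Lambda>" and t: "0 \<le> t"
    and cmp: "gram_form B0f t x / 4 \<le> gram_form Bf t x \<and> gram_form Bf t x \<le> 3 * gram_form B0f t x"
  shows "quad_form N (Ctilde N B r p t) x \<le> 4 * \<Lambda> * quad_form N (Cmat N B (p 0) a z t) x
       \<and> quad_form N (Cmat N B (p 0) a z t) x \<le> 4 * \<Lambda> * quad_form N (Ctilde N B r p t) x"
proof -
  let ?E = "gram_form B0f t x" and ?G = "gram_form Bf t x" and ?Q = "quad_form N (Cmat N B (p 0) a z t) x"
  have Q: "(1 / \<Lambda>) * ?G \<le> ?Q" "?Q \<le> \<Lambda> * ?G"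
    using quad_form_Cmat_bounds[where a = a and z = z, OF ell] by auto
  have "?G \<le> \<Lambda> * ?Q"
    using Q(1) Lam by (simp add: divide_le_eq mult.commute)
  then have "?E \<le> 4 * \<Lambda> * ?Q" using cmp by linarith
  moreover have "\<Lambda> * ?G \<le> \<Lambda> * (3 * ?E)" using cmp Lam by (intro mult_left_mono) auto
  moreover have "0 \<le> \<Lambda> * ?E" using gram_form_nonneg[OF t] Lam by simp
  ultimately show ?thesis using Q(2) unfolding quad_form_Ctilde by linarith
qed

lemma one_le_N: "1 \<le> N"
  using bs off_r unfolding block_structure_def by (simp add: off_Suc)

lemma Cmat_Ctilde_comparable:
  assumes ell: "\<And>\<xi>. (1 / \<Lambda>) * (\<Sum>i<p 0. (\<xi> i)\<^sup>2) \<le> (\<Sum>i<p 0. \<Sum>j<p 0. a i j z * \<xi> i * \<xi> j)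
       \<and> (\<Sum>i<p 0. \<Sum>j<p 0. a i j z * \<xi> i * \<xi> j) \<le> \<Lambda> * (\<Sum>i<p 0. (\<xi> i)\<^sup>2)"
    and sym: "\<And>i j. i < p 0 \<Longrightarrow> j < p 0 \<Longrightarrow> a i j z = a j i z"
    and Lam: "1 \<le> \<Lambda>" and t: "0 \<le> t"
    and cmp: "\<And>y. gram_form B0f t y / 4 \<le> gram_form Bf t y \<and> gram_form Bf t y \<le> 3 * gram_form B0f t y"
    and x: "x \<in> carrier_vec N"
  defines "M \<equiv> (4 * \<Lambda>) ^ N"
  shows "(1 / M) * ((Ctilde N B r p t *\<^sub>v x) \<bullet> x) \<le> (Cmat N B (p 0) a z t *\<^sub>v x) \<bullet> x
   \<and> (Cmat N B (p 0) a z t *\<^sub>v x) \<bullet> x \<le> M * ((Ctilde N B r p t *\<^sub>v x) \<bullet> x)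
   \<and> (1 / M) * det (Ctilde N B r p t) \<le> det (Cmat N B (p 0) a z t)
   \<and> det (Cmat N B (p 0) a z t) \<le> M * det (Ctilde N B r p t)"
proof -
  let ?Ct = "Ctilde N B r p t" and ?Cm = "Cmat N B (p 0) a z t"
  have K: "0 < 4 * \<Lambda>" and KM: "4 * \<Lambda> \<le> M"
    using Lam one_le_N power_increasing[of 1 N "4 * \<Lambda>"] unfolding M_def by auto
  have M: "0 < M" using K KM by linarith
  have qcmp: "quad_form N ?Ct y \<le> 4 * \<Lambda> * quad_form N ?Cm y \<and> quad_form N ?Cm y \<le> 4 * \<Lambda> * quad_form N ?Ct y"
    for y by (rule quad_form_Cmat_Ctilde_comparable[where a = a and z = z, OF ell Lam t cmp])
  have Pge: "0 \<le> quad_form N ?Ct y" for y unfolding quad_form_Ctilde by (rule gram_form_nonneg[OF t])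
  have "0 \<le> quad_form N ?Cm y" for y
    using qcmp[of y] Pge[of y] K by (smt (verit) mult_pos_neg)
  then have qM: "quad_form N ?Ct y \<le> M * quad_form N ?Cm y \<and> quad_form N ?Cm y \<le> M * quad_form N ?Ct y" for y
    using qcmp[of y] Pge[of y] mult_right_mono[OF KM] by (meson order_trans)
  have dM: "det ?Ct \<le> M * det ?Cm \<and> det ?Cm \<le> M * det ?Ct"
  proof (cases "t = 0")
    case True
    then show ?thesis
      using one_le_N by (simp add: Ctilde_def Cmat_def covar_zero)
  next
    case False
    show ?thesis
      unfolding M_def
      by (rule det_comparable_of_quad_form_comparable[OF Cmat_carrier Ctilde_carrier sym_mat_Cmat[where a = a and z = z, OF sym]
            sym_mat_Ctilde pos_def_mat_Ctilde K])
         (use qcmp False t in auto)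
  qed
  show ?thesis
    unfolding quad_form_eq_scalar_prod[OF Ctilde_carrier x] quad_form_eq_scalar_prod[OF Cmat_carrier x]
    using qM[of "\<lambda>i. x $ i"] dM M by (simp add: pos_divide_le_eq mult.commute)
qed

end

theorem lemma9:
  fixes N r :: nat and p :: "nat \<Rightarrow> nat" and B :: "real mat"
    and a :: "nat \<Rightarrow> nat \<Rightarrow> real Matrix.vec \<Rightarrow> real" and \<Lambda> :: real
  assumes bs: "block_structure N B r p"
    and p0: "1 \<le> p 0" "p 0 \<le> N"
    and Lam: "\<Lambda> \<ge> 1"
    and sym: "\<And>z i j. z \<in> carrier_vec (N + 1) \<Longrightarrow> i < p 0 \<Longrightarrow> j < p 0 \<Longrightarrow> a i j z = a j i z"
    and ell: "\<And>z \<xi>. z \<in> carrier_vec (N + 1) \<Longrightarrow>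
       (1 / \<Lambda>) * (\<Sum>i<p 0. (\<xi> i)\<^sup>2) \<le> (\<Sum>i<p 0. \<Sum>j<p 0. a i j z * \<xi> i * \<xi> j)
       \<and> (\<Sum>i<p 0. \<Sum>j<p 0. a i j z * \<xi> i * \<xi> j) \<le> \<Lambda> * (\<Sum>i<p 0. (\<xi> i)\<^sup>2)"
  shows "\<exists>M\<ge>1. \<exists>T>0. \<forall>x\<in>carrier_vec N. \<forall>z0\<in>carrier_vec (N + 1). \<forall>t\<in>{0..T}.
     (1 / M) * ((Ctilde N B r p t *\<^sub>v x) \<bullet> x) \<le> (Cmat N B (p 0) a z0 t *\<^sub>v x) \<bullet> x
   \<and> (Cmat N B (p 0) a z0 t *\<^sub>v x) \<bullet> x \<le> M * ((Ctilde N B r p t *\<^sub>v x) \<bullet> x)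
   \<and> (1 / M) * det (Ctilde N B r p t) \<le> det (Cmat N B (p 0) a z0 t)
   \<and> det (Cmat N B (p 0) a z0 t) \<le> M * det (Ctilde N B r p t)"
proof -
  interpret block_matrix N B r p by unfold_locales (rule bs)
  obtain T where T: "0 < T" and cmp: "\<And>t x. 0 \<le> t \<Longrightarrow> t \<le> T \<Longrightarrow>
      gram_form B0f t x / 4 \<le> gram_form Bf t x \<and> gram_form Bf t x \<le> 3 * gram_form B0f t x"
    using gram_form_comparable_small_time by blast
  have M: "1 \<le> (4 * \<Lambda>) ^ N" using Lam by (intro one_le_power) simp
  have main: "(1 / (4 * \<Lambda>) ^ N) * ((Ctilde N B r p t *\<^sub>v x) \<bullet> x) \<le> (Cmat N B (p 0) a z0 t *\<^sub>v x) \<bullet> x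
   \<and> (Cmat N B (p 0) a z0 t *\<^sub>v x) \<bullet> x \<le> (4 * \<Lambda>) ^ N * ((Ctilde N B r p t *\<^sub>v x) \<bullet> x)
   \<and> (1 / (4 * \<Lambda>) ^ N) * det (Ctilde N B r p t) \<le> det (Cmat N B (p 0) a z0 t)
   \<and> det (Cmat N B (p 0) a z0 t) \<le> (4 * \<Lambda>) ^ N * det (Ctilde N B r p t)"
    if x: "x \<in> carrier_vec N" and z0: "z0 \<in> carrier_vec (N + 1)" and t: "t \<in> {0..T}" for x z0 t
    by (rule Cmat_Ctilde_comparable[where a = a and z = z0, OF ell[OF z0] sym[OF z0] Lam _ cmp x]) (use t in auto)
  show ?thesis
    by (intro exI[of _ "(4 * \<Lambda>) ^ N"] conjI M exI[of _ T] T ballI main)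
qed

end
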